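(* Let $K$ be a field of characteristic $0$ such that $K_{\mathrm{ab}}/\mathbb{Q}$ has finite degree, and let $\Lambda$ be its Chevalley–Bass number. (i) $\Lambda$ is the smallest positive integer $L$ such that, for every integer $n>0$, the image of the inflation map $H^1(G_{Ln},\mu_{Ln})\to H^1(K,\mu_{Ln})$ lies in the image of the map $H^1(K,\mu_L)\to H^1(K,\mu_{Ln})$ induced by the inclusion $\mu_L\subseteq\mu_{Ln}$. (ii) $\Lambda$ is the smallest positive integer $L$ such that, for every integer $n>0$, the map $H^1(G_{Ln},\mu_L)\to H^1(G_{Ln},\mu_{Ln})$ induced by the inclusion $\mu_L\subseteq\mu_{Ln}$ is surjective.
   Context: $K_{\mathrm{ab}}$ is the maximal abelian subextension of $K/\mathbb{Q}$. The Chevalley–Bass number of $K$ is the smallest positive integer $\Lambda$ such that for every positive integer $n$, $(K(\zeta_{\Lambda n})^\times)^{\Lambda n}\cap K^\times\subseteq (K^\times)^n$. $\mu_n$ denotes the Galois module of $n$th roots of unity in an algebraic closure of $K$, $\zeta_n$ a primitive $n$th root of unity, $G_n:=\mathrm{Gal}(K(\zeta_n)/K)$; $H^1(K,M)$ denotes Galois cohomology of the absolute Galois group of $K$. *)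

theory Defs
  imports "HOL-Computational_Algebra.Polynomial" "HOL-Library.FuncSet"
begin

text \<open>Setting: \<Omega> is an algebraically closed field of characteristic 0 (a type),
  K \<subseteq> \<Omega> is a subfield over which \<Omega> is algebraic, so \<Omega> is an algebraic
  closure of K.\<close>

definition is_subfield :: "'a::field set \<Rightarrow> bool" where
  "is_subfield F \<longleftrightarrow> 0 \<in> F \<and> 1 \<in> F \<and>
     (\<forall>x\<in>F. \<forall>y\<in>F. x + y \<in> F \<and> x - y \<in> F \<and> x * y \<in> F) \<and>
     (\<forall>x\<in>F. inverse x \<in> F)"

definition field_gen :: "'a::field set \<Rightarrow> 'a set" where
  "field_gen S = \<Inter>{F. is_subfield F \<and> S \<subseteq> F}"

definition algebraic_over :: "'a::field set \<Rightarrow> 'a \<Rightarrow> bool" where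
  "algebraic_over K x \<longleftrightarrow> (\<exists>p::'a poly. p \<noteq> 0 \<and> (\<forall>i. coeff p i \<in> K) \<and> poly p x = 0)"

definition mu :: "nat \<Rightarrow> 'a::field set" where
  "mu n = {z. z ^ n = 1}"

definition cyc :: "'a::field set \<Rightarrow> nat \<Rightarrow> 'a set" where
  "cyc K n = field_gen (K \<union> mu n)"

definition abs_gal :: "'a::field set \<Rightarrow> ('a \<Rightarrow> 'a) set" where
  "abs_gal K = {\<sigma>. bij \<sigma> \<and> (\<forall>x y. \<sigma> (x + y) = \<sigma> x + \<sigma> y \<and> \<sigma> (x * y) = \<sigma> x * \<sigma> y)
                  \<and> \<sigma> 1 = 1 \<and> (\<forall>x\<in>K. \<sigma> x = x)}"

definition gal_cyc :: "'a::field set \<Rightarrow> nat \<Rightarrow> ('a \<Rightarrow> 'a) set" where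
  "gal_cyc K n = {g. g \<in> extensional (cyc K n) \<and> bij_betw g (cyc K n) (cyc K n) \<and>
      (\<forall>x\<in>cyc K n. \<forall>y\<in>cyc K n. g (x + y) = g x + g y \<and> g (x * y) = g x * g y)
      \<and> g 1 = 1 \<and> (\<forall>x\<in>K. g x = x)}"

definition gal_cyc_comp :: "'a::field set \<Rightarrow> nat \<Rightarrow> ('a \<Rightarrow> 'a) \<Rightarrow> ('a \<Rightarrow> 'a) \<Rightarrow> ('a \<Rightarrow> 'a)" where
  "gal_cyc_comp K n g h = restrict (g \<circ> h) (cyc K n)"

definition cocycle :: "('g \<Rightarrow> 'g \<Rightarrow> 'g) \<Rightarrow> 'g set \<Rightarrow> ('g \<Rightarrow> 'a \<Rightarrow> 'a)
     \<Rightarrow> 'a::field set \<Rightarrow> ('g \<Rightarrow> 'a) \<Rightarrow> bool" where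
  "cocycle gop G act M a \<longleftrightarrow> (\<forall>\<sigma>\<in>G. a \<sigma> \<in> M) \<and>
     (\<forall>\<sigma>\<in>G. \<forall>\<tau>\<in>G. a (gop \<sigma> \<tau>) = a \<sigma> * act \<sigma> (a \<tau>))"

definition cohomologous :: "'g set \<Rightarrow> ('g \<Rightarrow> 'a \<Rightarrow> 'a) \<Rightarrow> 'a::field set
     \<Rightarrow> ('g \<Rightarrow> 'a) \<Rightarrow> ('g \<Rightarrow> 'a) \<Rightarrow> bool" where
  "cohomologous G act M a c \<longleftrightarrow> (\<exists>b\<in>M. \<forall>\<sigma>\<in>G. a \<sigma> = c \<sigma> * (act \<sigma> b / b))"

text \<open>Continuous cocycles of the absolute Galois group (Krull topology, discrete module):
  locally constant, i.e. depending only on the restriction to some finite set\<close>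
definition cont_cocycle :: "'a::field set \<Rightarrow> 'a set \<Rightarrow> (('a \<Rightarrow> 'a) \<Rightarrow> 'a) \<Rightarrow> bool" where
  "cont_cocycle K M a \<longleftrightarrow> cocycle (\<circ>) (abs_gal K) (\<lambda>\<sigma>. \<sigma>) M a \<and>
     (\<exists>S. finite S \<and> (\<forall>\<sigma>\<in>abs_gal K. \<forall>\<tau>\<in>abs_gal K. (\<forall>x\<in>S. \<sigma> x = \<tau> x) \<longrightarrow> a \<sigma> = a \<tau>))"

definition inflate :: "'a::field set \<Rightarrow> nat \<Rightarrow> (('a \<Rightarrow> 'a) \<Rightarrow> 'a) \<Rightarrow> (('a \<Rightarrow> 'a) \<Rightarrow> 'a)" where
  "inflate K n f = (\<lambda>\<sigma>. f (restrict \<sigma> (cyc K n)))"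

definition CB_prop :: "'a::field set \<Rightarrow> nat \<Rightarrow> bool" where
  "CB_prop K L \<longleftrightarrow> (\<forall>n>0. \<forall>x\<in>K - {0}.
      (\<exists>y\<in>cyc K (L * n) - {0}. x = y ^ (L * n)) \<longrightarrow> (\<exists>z\<in>K - {0}. x = z ^ n))"

definition prop_i :: "'a::field set \<Rightarrow> nat \<Rightarrow> bool" where
  "prop_i K L \<longleftrightarrow> (\<forall>n>0. \<forall>f. cocycle (gal_cyc_comp K (L * n)) (gal_cyc K (L * n)) (\<lambda>g. g)
         (mu (L * n)) f \<longrightarrow>
       (\<exists>c. cont_cocycle K (mu L) c \<and>
          cohomologous (abs_gal K) (\<lambda>\<sigma>. \<sigma>) (mu (L * n)) (inflate K (L * n) f) c))"

definition prop_ii :: "'a::field set \<Rightarrow> nat \<Rightarrow> bool" where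
  "prop_ii K L \<longleftrightarrow> (\<forall>n>0. \<forall>f. cocycle (gal_cyc_comp K (L * n)) (gal_cyc K (L * n)) (\<lambda>g. g)
         (mu (L * n)) f \<longrightarrow>
       (\<exists>c. cocycle (gal_cyc_comp K (L * n)) (gal_cyc K (L * n)) (\<lambda>g. g) (mu L) c \<and>
          cohomologous (gal_cyc K (L * n)) (\<lambda>g. g) (mu (L * n)) f c))"

definition finite_over_Q :: "'a::field_char_0 set \<Rightarrow> bool" where
  "finite_over_Q F \<longleftrightarrow> (\<exists>B. finite B \<and> B \<subseteq> F \<and>
      (\<forall>x\<in>F. \<exists>c. x = (\<Sum>b\<in>B. of_rat (c b) * b)))"

definition embedding_on :: "'a::field set \<Rightarrow> ('a \<Rightarrow> 'a) \<Rightarrow> bool" where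
  "embedding_on F \<phi> \<longleftrightarrow> (\<forall>x\<in>F. \<forall>y\<in>F. \<phi> (x + y) = \<phi> x + \<phi> y \<and> \<phi> (x * y) = \<phi> x * \<phi> y)
      \<and> \<phi> 1 = 1"

text \<open>F is a finite abelian (Galois) extension of \<Q> (char 0, so separable):
  normal (every embedding maps F into F) with commutative automorphism group\<close>
definition abelian_over_Q :: "'a::field_char_0 set \<Rightarrow> bool" where
  "abelian_over_Q F \<longleftrightarrow> is_subfield F \<and> finite_over_Q F \<and>
     (\<forall>\<phi>. embedding_on F \<phi> \<longrightarrow> \<phi> ` F \<subseteq> F) \<and>
     (\<forall>\<phi> \<psi>. embedding_on F \<phi> \<and> embedding_on F \<psi> \<longrightarrow> (\<forall>x\<in>F. \<phi> (\<psi> x) = \<psi> (\<phi> x)))"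

definition K_ab :: "'a::field_char_0 set \<Rightarrow> 'a set" where
  "K_ab K = field_gen (\<Union>{F. F \<subseteq> K \<and> abelian_over_Q F})"

definition is_least_pos :: "(nat \<Rightarrow> bool) \<Rightarrow> nat \<Rightarrow> bool" where
  "is_least_pos P L \<longleftrightarrow> L > 0 \<and> P L \<and> (\<forall>L'. L' > 0 \<and> P L' \<longrightarrow> L \<le> L')"

end

theory Submission
  imports Defs
begin

text \<open>For each \<open>L > 0\<close>, properties (i) and (ii) are both equivalent to the Chevalley--Bass
  property of \<open>L\<close>, rephrased as: every \<open>y \<in> K(\<zeta>\<^sub>L\<^sub>n)\<^sup>\<times>\<close> with \<open>y\<^sup>L\<^sup>n \<in> K\<close> becomes, after division by
  some \<open>\<eta> \<in> \<mu>\<^sub>L\<^sub>n\<close>, an \<open>L\<close>-th root of an element of \<open>K\<close>.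
  By Hilbert 90 a cocycle \<open>f\<close> of \<open>G\<^sub>L\<^sub>n\<close> with values in \<open>\<mu>\<^sub>L\<^sub>n\<close> is \<open>g \<mapsto> g(\<beta>)/\<beta>\<close> with \<open>\<beta>\<^sup>L\<^sup>n \<in> K\<close>;
  then \<open>f\<close> is cohomologous via \<open>\<eta>\<close> to the \<open>\<mu>\<^sub>L\<close>-valued coboundary of \<open>\<beta>/\<eta>\<close>, on \<open>G\<^sub>L\<^sub>n\<close> and,
  after inflation, on the absolute Galois group. Conversely, if the coboundary of \<open>y\<close> is
  cohomologous via \<open>b \<in> \<mu>\<^sub>L\<^sub>n\<close> to a \<open>\<mu>\<^sub>L\<close>-valued cocycle, then \<open>(y/b)\<^sup>L\<close> is Galois invariant, hence
  in \<open>K\<close>. Galois invariance implies membership in \<open>K\<close> because every embedding over \<open>K\<close> extends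
  to an automorphism of the algebraic closure (Zorn's lemma), and because in characteristic 0
  minimal polynomials are separable.\<close>

definition is_subring :: "'a::comm_ring_1 set \<Rightarrow> bool" where
  "is_subring R \<longleftrightarrow> 0 \<in> R \<and> 1 \<in> R \<and> (\<forall>x\<in>R. \<forall>y\<in>R. x + y \<in> R \<and> x - y \<in> R \<and> x * y \<in> R)"

lemma subfield_imp_subring: "is_subfield F \<Longrightarrow> is_subring F"
  unfolding is_subfield_def is_subring_def by blast

lemma subring_0: "is_subring R \<Longrightarrow> 0 \<in> R"
  and subring_1: "is_subring R \<Longrightarrow> 1 \<in> R"
  and subring_add: "is_subring R \<Longrightarrow> x \<in> R \<Longrightarrow> y \<in> R \<Longrightarrow> x + y \<in> R"
  and subring_diff: "is_subring R \<Longrightarrow> x \<in> R \<Longrightarrow> y \<in> R \<Longrightarrow> x - y \<in> R"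
  and subring_mult: "is_subring R \<Longrightarrow> x \<in> R \<Longrightarrow> y \<in> R \<Longrightarrow> x * y \<in> R"
  by (simp_all add: is_subring_def)

lemma subring_uminus: "is_subring R \<Longrightarrow> x \<in> R \<Longrightarrow> - x \<in> R"
  using subring_diff[of R 0 x] subring_0[of R] by simp

lemma subring_power: "is_subring R \<Longrightarrow> x \<in> R \<Longrightarrow> x ^ n \<in> R"
  by (induction n) (auto intro: subring_mult subring_1)

lemma subring_of_nat: "is_subring R \<Longrightarrow> of_nat n \<in> R"
  by (induction n) (auto intro: subring_add subring_0 subring_1)

lemma subring_sum: "is_subring R \<Longrightarrow> (\<And>i. i \<in> A \<Longrightarrow> f i \<in> R) \<Longrightarrow> sum f A \<in> R"
  by (induction A rule: infinite_finite_induct) (auto intro: subring_add subring_0)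

lemma subfield_inverse: "is_subfield F \<Longrightarrow> x \<in> F \<Longrightarrow> inverse x \<in> F"
  unfolding is_subfield_def by auto

lemma subfield_divide: "is_subfield F \<Longrightarrow> x \<in> F \<Longrightarrow> y \<in> F \<Longrightarrow> x / y \<in> F"
  by (simp add: divide_inverse subfield_inverse subring_mult subfield_imp_subring)

lemma subfield_UNIV: "is_subfield UNIV"
  unfolding is_subfield_def by auto

definition poly_over :: "'a::comm_ring_1 set \<Rightarrow> 'a poly \<Rightarrow> bool" where
  "poly_over R p \<longleftrightarrow> (\<forall>i. coeff p i \<in> R)"

lemma algebraic_over_iff_poly_over: "algebraic_over K x \<longleftrightarrow> (\<exists>p. p \<noteq> 0 \<and> poly_over K p \<and> poly p x = 0)"
  unfolding algebraic_over_def poly_over_def ..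

context
  fixes R :: "'a::comm_ring_1 set"
  assumes R: "is_subring R"
begin

lemma poly_over_0 [simp]: "poly_over R 0"
  unfolding poly_over_def by (simp add: subring_0 R)

lemma poly_over_pCons: "poly_over R (pCons a p) \<longleftrightarrow> a \<in> R \<and> poly_over R p"
  unfolding poly_over_def by (auto simp: coeff_pCons split: nat.split)

lemma poly_over_const: "a \<in> R \<Longrightarrow> poly_over R [:a:]"
  by (simp add: poly_over_pCons)

lemma poly_over_X: "poly_over R [:0, 1:]"
  by (simp add: poly_over_pCons subring_0 subring_1 R)

lemma poly_over_add: "poly_over R p \<Longrightarrow> poly_over R q \<Longrightarrow> poly_over R (p + q)"
  unfolding poly_over_def by (auto intro: subring_add R)

lemma poly_over_diff: "poly_over R p \<Longrightarrow> poly_over R q \<Longrightarrow> poly_over R (p - q)"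
  unfolding poly_over_def by (auto intro: subring_diff R)

lemma poly_over_mult: "poly_over R p \<Longrightarrow> poly_over R q \<Longrightarrow> poly_over R (p * q)"
  unfolding poly_over_def coeff_mult by (auto intro!: subring_sum subring_mult R)

lemma poly_over_smult: "a \<in> R \<Longrightarrow> poly_over R p \<Longrightarrow> poly_over R (smult a p)"
  unfolding poly_over_def by (auto intro: subring_mult R)

lemma poly_over_monom: "a \<in> R \<Longrightarrow> poly_over R (monom a n)"
  unfolding poly_over_def by (auto intro: subring_0 R)

lemma poly_in_subring: "poly_over R p \<Longrightarrow> x \<in> R \<Longrightarrow> poly p x \<in> R"
  by (induction p) (simp_all add: poly_over_pCons subring_add subring_mult subring_0 R)

end

lemma poly_over_pderiv:
  fixes p :: "'a::idom poly"
  shows "is_subring R \<Longrightarrow> poly_over R p \<Longrightarrow> poly_over R (pderiv p)"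
  unfolding poly_over_def coeff_pderiv by (metis subring_mult subring_of_nat)

lemma poly_over_mono: "R \<subseteq> S \<Longrightarrow> poly_over R p \<Longrightarrow> poly_over S p"
  unfolding poly_over_def by auto

lemma algebraic_over_mono: "K \<subseteq> F \<Longrightarrow> algebraic_over K x \<Longrightarrow> algebraic_over F x"
  unfolding algebraic_over_iff_poly_over using poly_over_mono by blast

lemma poly_over_monic_associate:
  fixes p :: "'a::field poly"
  assumes F: "is_subfield F" and p: "poly_over F p" "p \<noteq> 0"
  obtains q where "poly_over F q" "lead_coeff q = 1" "degree q = degree p"
    "\<And>x. poly q x = 0 \<longleftrightarrow> poly p x = 0"
proof
  let ?q = "smult (inverse (lead_coeff p)) p"
  have "inverse (lead_coeff p) \<in> F"
    using p(1) subfield_inverse[OF F] unfolding poly_over_def by blast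
  then show "poly_over F ?q"
    using poly_over_smult[OF subfield_imp_subring[OF F] _ p(1)] by blast
qed (use p(2) in auto)

text \<open>A polynomial of minimal degree over \<open>K\<close> vanishing at \<open>x \<noteq> 0\<close> has nonzero constant
  term, which expresses \<open>x\<inverse>\<close> as a polynomial in \<open>x\<close>.\<close>
lemma subring_algebraic_inverse:
  fixes K T :: "'a::field set"
  assumes T: "is_subring T" and KT: "K \<subseteq> T" and K: "is_subfield K"
    and alg: "algebraic_over K x" and xT: "x \<in> T"
  shows "inverse x \<in> T"
proof (cases "x = 0")
  case True
  then show ?thesis using subring_0[OF T] by simp
next
  case False
  have K': "is_subring K" using subfield_imp_subring[OF K] .
  let ?P = "\<lambda>p. p \<noteq> 0 \<and> poly_over K p \<and> poly p x = 0"
  obtain p where Pp: "?P p" and min: "\<And>q. ?P q \<Longrightarrow> degree p \<le> degree q"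
    using alg ex_has_least_nat[of ?P _ degree] unfolding algebraic_over_iff_poly_over by metis
  obtain a p1 where pp: "p = pCons a p1" by (cases p)
  have a: "a \<in> K" and p1: "poly_over K p1" using Pp pp poly_over_pCons[OF K'] by auto
  have eq: "a + x * poly p1 x = 0" using Pp pp by simp
  have "a \<noteq> 0"
  proof
    assume "a = 0"
    then have "?P p1" using Pp pp eq False p1 by auto
    then show False using min[of p1] pp by fastforce
  qed
  then have "inverse x = - (inverse a * poly p1 x)"
    using eq False by (simp add: field_simps eq_neg_iff_add_eq_0)
  moreover have "inverse a * poly p1 x \<in> T"
    using subfield_inverse[OF K a] KT poly_in_subring[OF T poly_over_mono[OF KT p1] xT]
      subring_mult[OF T] by blast
  ultimately show ?thesis using subring_uminus[OF T] by simp
qed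

lemma subring_algebraic_imp_subfield:
  fixes K T :: "'a::field set"
  assumes "is_subring T" "K \<subseteq> T" "is_subfield K" "\<And>x. x \<in> T \<Longrightarrow> algebraic_over K x"
  shows "is_subfield T"
  using assms subring_algebraic_inverse[OF assms(1-3)]
  unfolding is_subfield_def is_subring_def by blast

lemma poly_over_divmod_monic:
  fixes p q :: "'a::field poly"
  assumes R: "is_subring R" and p: "poly_over R p" "lead_coeff p = 1" and q: "poly_over R q"
  shows "\<exists>s r. poly_over R s \<and> poly_over R r \<and> q = s * p + r \<and> (r = 0 \<or> degree r < degree p)"
  using q
proof (induction "degree q" arbitrary: q rule: less_induct)
  case less
  show ?case
  proof (cases "q = 0 \<or> degree q < degree p")
    case True
    then show ?thesis using less.prems R by (intro exI[of _ 0] exI[of _ q]) auto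
  next
    case False
    then have qnz: "q \<noteq> 0" and dqp: "degree p \<le> degree q" by auto
    define t where "t = monom (lead_coeff q) (degree q - degree p)"
    define q' where "q' = q - t * p"
    have lcq: "lead_coeff q \<noteq> 0" using qnz by simp
    have "t \<noteq> 0" "p \<noteq> 0" using lcq p(2) by (auto simp: t_def)
    moreover have "degree t = degree q - degree p"
      unfolding t_def using lcq by (rule degree_monom_eq)
    ultimately have dt: "degree (t * p) = degree q"
      using dqp by (simp add: degree_mult_eq)
    have "lead_coeff (t * p) = lead_coeff q"
      using p(2) by (simp only: lead_coeff_mult t_def lead_coeff_monom mult_1_right)
    then have "coeff q' (degree q) = 0" by (simp add: q'_def dt)
    moreover have "degree q' \<le> degree q" unfolding q'_def by (rule degree_diff_le) (simp_all add: dt)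
    ultimately have smaller: "q' = 0 \<or> degree q' < degree q"
      by (metis le_neq_implies_less leading_coeff_0_iff)
    have t: "poly_over R t"
      using less.prems poly_over_monom[OF R] unfolding t_def poly_over_def by blast
    have q': "poly_over R q'"
      unfolding q'_def using poly_over_diff[OF R less.prems poly_over_mult[OF R t p(1)]] .
    have "\<exists>s r. poly_over R s \<and> poly_over R r \<and> q' = s * p + r \<and> (r = 0 \<or> degree r < degree p)"
      using smaller less.hyps[OF _ q'] R by (metis add.right_neutral mult_zero_left poly_over_0)
    then obtain s r where sr: "poly_over R s" "poly_over R r" "q' = s * p + r" "r = 0 \<or> degree r < degree p"
      by blast
    have "q = (s + t) * p + r" using sr(3) by (simp add: q'_def algebra_simps)
    then show ?thesis using sr poly_over_add[OF R sr(1) t] by blast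
  qed
qed

definition is_minpoly :: "'a::field set \<Rightarrow> 'a \<Rightarrow> 'a poly \<Rightarrow> bool" where
  "is_minpoly F y p \<longleftrightarrow> poly_over F p \<and> lead_coeff p = 1 \<and> poly p y = 0 \<and>
     (\<forall>q. poly_over F q \<and> poly q y = 0 \<longrightarrow> (\<exists>s. poly_over F s \<and> q = s * p))"

lemma minpoly_exists:
  fixes F :: "'a::field set"
  assumes F: "is_subfield F" and alg: "algebraic_over F y"
  obtains p where "is_minpoly F y p"
proof -
  let ?P = "\<lambda>p. poly_over F p \<and> lead_coeff p = 1 \<and> poly p y = 0"
  have R: "is_subring F" using subfield_imp_subring[OF F] .
  from alg obtain p0 where "p0 \<noteq> 0" "poly_over F p0" "poly p0 y = 0"
    unfolding algebraic_over_iff_poly_over by blast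
  then have "\<exists>p. ?P p" using poly_over_monic_associate[OF F] by metis
  then obtain p where Pp: "?P p" and min: "\<And>q. ?P q \<Longrightarrow> degree p \<le> degree q"
    using ex_has_least_nat[of ?P _ degree] by metis
  have "\<exists>s. poly_over F s \<and> q = s * p" if q: "poly_over F q" "poly q y = 0" for q
  proof -
    obtain s r where sr: "poly_over F s" "poly_over F r" "q = s * p + r" "r = 0 \<or> degree r < degree p"
      using poly_over_divmod_monic[OF R, of p q] Pp q by blast
    have "r = 0"
    proof (rule ccontr)
      assume "r \<noteq> 0"
      moreover have "poly r y = 0" using sr(3) q(2) Pp by simp
      ultimately have "degree p \<le> degree r"
        using poly_over_monic_associate[OF F sr(2)] min by metis
      then show False using sr(4) \<open>r \<noteq> 0\<close> by simp
    qed
    then show ?thesis using sr by auto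
  qed
  then show ?thesis using that Pp unfolding is_minpoly_def by blast
qed

lemma degree_minpoly_pos: "is_minpoly F y p \<Longrightarrow> 0 < degree p"
proof (rule ccontr)
  assume "is_minpoly F y p" "\<not> 0 < degree p"
  then obtain c where "p = [:c:]" "c = 1" "poly p y = 0"
    unfolding is_minpoly_def by (metis degree_eq_zeroE gr0I lead_coeff_pCons(2))
  then show False by simp
qed

definition hom_on :: "'a::field set \<Rightarrow> ('a \<Rightarrow> 'a) \<Rightarrow> bool" where
  "hom_on R \<phi> \<longleftrightarrow> \<phi> 1 = 1 \<and> (\<forall>x\<in>R. \<forall>y\<in>R. \<phi> (x + y) = \<phi> x + \<phi> y \<and> \<phi> (x * y) = \<phi> x * \<phi> y)"

lemma hom_on_1: "hom_on R \<phi> \<Longrightarrow> \<phi> 1 = 1"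
  and hom_on_add: "hom_on R \<phi> \<Longrightarrow> x \<in> R \<Longrightarrow> y \<in> R \<Longrightarrow> \<phi> (x + y) = \<phi> x + \<phi> y"
  and hom_on_mult: "hom_on R \<phi> \<Longrightarrow> x \<in> R \<Longrightarrow> y \<in> R \<Longrightarrow> \<phi> (x * y) = \<phi> x * \<phi> y"
  by (simp_all add: hom_on_def)

context
  fixes R :: "'a::field set" and \<phi> :: "'a \<Rightarrow> 'a"
  assumes R: "is_subring R" and h: "hom_on R \<phi>"
begin

lemma hom_on_0: "\<phi> 0 = 0"
  using hom_on_add[OF h subring_0[OF R] subring_0[OF R]] by (metis add_cancel_right_right)

lemma hom_on_diff: "x \<in> R \<Longrightarrow> y \<in> R \<Longrightarrow> \<phi> (x - y) = \<phi> x - \<phi> y"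
  using hom_on_add[OF h subring_diff[OF R], of x y y] by (simp add: algebra_simps)

lemma hom_on_sum: "(\<And>i. i \<in> A \<Longrightarrow> f i \<in> R) \<Longrightarrow> \<phi> (sum f A) = (\<Sum>i\<in>A. \<phi> (f i))"
proof (induction A rule: infinite_finite_induct)
  case (insert x F)
  then show ?case using hom_on_add[OF h, of "f x" "sum f F"] subring_sum[OF R, of F f] by auto
qed (auto simp: hom_on_0)

lemma hom_on_power: "x \<in> R \<Longrightarrow> \<phi> (x ^ n) = \<phi> x ^ n"
  by (induction n) (simp_all add: hom_on_1[OF h] hom_on_mult[OF h] subring_power[OF R])

lemma hom_on_poly: "poly_over R p \<Longrightarrow> x \<in> R \<Longrightarrow> \<phi> (poly p x) = poly (map_poly \<phi> p) (\<phi> x)"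
  by (induction p)
    (simp_all add: poly_over_pCons[OF R] hom_on_0 map_poly_pCons hom_on_add[OF h]
      hom_on_mult[OF h] subring_mult[OF R] poly_in_subring[OF R])

lemma map_poly_hom_on_diff:
  "poly_over R p \<Longrightarrow> poly_over R q \<Longrightarrow> map_poly \<phi> (p - q) = map_poly \<phi> p - map_poly \<phi> q"
  by (intro poly_eqI) (simp add: coeff_map_poly hom_on_0 hom_on_diff poly_over_def)

lemma map_poly_hom_on_add:
  "poly_over R p \<Longrightarrow> poly_over R q \<Longrightarrow> map_poly \<phi> (p + q) = map_poly \<phi> p + map_poly \<phi> q"
  by (intro poly_eqI) (simp add: coeff_map_poly hom_on_0 hom_on_add[OF h] poly_over_def)

lemma map_poly_hom_on_mult:
  "poly_over R p \<Longrightarrow> poly_over R q \<Longrightarrow> map_poly \<phi> (p * q) = map_poly \<phi> p * map_poly \<phi> q"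
  by (intro poly_eqI)
    (simp add: coeff_map_poly hom_on_0 coeff_mult hom_on_sum poly_over_def subring_mult[OF R]
      hom_on_mult[OF h])

lemma degree_map_poly_hom_on_monic: "lead_coeff p = 1 \<Longrightarrow> degree (map_poly \<phi> p) = degree p"
  by (rule map_poly_degree_eq) (simp add: hom_on_1[OF h])

end

context
  fixes F :: "'a::field set" and \<phi> :: "'a \<Rightarrow> 'a"
  assumes F: "is_subfield F" and h: "hom_on F \<phi>"
begin

lemma hom_on_inverse: "x \<in> F \<Longrightarrow> \<phi> (inverse x) = inverse (\<phi> x)"
proof (cases "x = 0")
  case True
  then show ?thesis using hom_on_0[OF subfield_imp_subring[OF F] h] by simp
next
  case False
  assume x: "x \<in> F"
  have "\<phi> x * \<phi> (inverse x) = 1"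
    using hom_on_mult[OF h x subfield_inverse[OF F x]] hom_on_1[OF h] False by simp
  then show ?thesis by (metis inverse_unique)
qed

lemma hom_on_divide: "x \<in> F \<Longrightarrow> y \<in> F \<Longrightarrow> \<phi> (x / y) = \<phi> x / \<phi> y"
  by (simp add: divide_inverse hom_on_mult[OF h] subfield_inverse[OF F] hom_on_inverse)

lemma hom_on_nonzero: "x \<in> F \<Longrightarrow> x \<noteq> 0 \<Longrightarrow> \<phi> x \<noteq> 0"
  using hom_on_mult[OF h _ subfield_inverse[OF F], of x x] hom_on_1[OF h] by auto

lemma hom_on_inj_on: "inj_on \<phi> F"
proof (rule inj_onI)
  fix x y assume xy: "x \<in> F" "y \<in> F" "\<phi> x = \<phi> y"
  then have "\<phi> (x - y) = 0" using hom_on_diff[OF subfield_imp_subring[OF F] h] by simp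
  then have "x - y = 0"
    using hom_on_nonzero subring_diff[OF subfield_imp_subring[OF F] xy(1,2)] by blast
  then show "x = y" by simp
qed

end

section \<open>Extending embeddings to automorphisms\<close>

lemma subring_poly_eval:
  assumes D: "is_subring D"
  shows "is_subring {poly q y | q. poly_over D q}"
  unfolding is_subring_def
proof (intro conjI ballI)
  let ?S = "{poly q y | q. poly_over D q}"
  show "0 \<in> ?S" using poly_over_0[OF D] by force
  show "1 \<in> ?S" using poly_over_const[OF D subring_1[OF D]] by force
  fix a b assume "a \<in> ?S" "b \<in> ?S"
  then obtain qa qb where q: "poly_over D qa" "a = poly qa y" "poly_over D qb" "b = poly qb y"
    by blast
  show "a + b \<in> ?S" using poly_over_add[OF D q(1,3)] q by force
  show "a - b \<in> ?S" using poly_over_diff[OF D q(1,3)] q by force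
  show "a * b \<in> ?S" using poly_over_mult[OF D q(1,3)] q by force
qed

text \<open>Embeddings over \<open>K\<close> of subfields into the ambient field are represented by their graphs,
  so that unions of chains, and hence Zorn's lemma, are directly available.\<close>
definition emb_graph :: "'a::field set \<Rightarrow> ('a \<times> 'a) set \<Rightarrow> bool" where
  "emb_graph K G \<longleftrightarrow> single_valued G \<and> is_subfield (Domain G) \<and> (\<forall>x\<in>K. (x, x) \<in> G) \<and>
     (\<forall>x a y b. (x, a) \<in> G \<longrightarrow> (y, b) \<in> G \<longrightarrow> (x + y, a + b) \<in> G \<and> (x * y, a * b) \<in> G)"

definition graph_app :: "('a \<times> 'a) set \<Rightarrow> 'a \<Rightarrow> 'a" where
  "graph_app G x = (THE a. (x, a) \<in> G)"

lemma graph_app_eq: "single_valued G \<Longrightarrow> (x, a) \<in> G \<Longrightarrow> graph_app G x = a"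
  unfolding graph_app_def single_valued_def by blast

lemma graph_app_in: "single_valued G \<Longrightarrow> x \<in> Domain G \<Longrightarrow> (x, graph_app G x) \<in> G"
  using graph_app_eq by fastforce

lemma emb_graph_hom_on:
  assumes K: "1 \<in> K" and G: "emb_graph K G"
  shows "hom_on (Domain G) (graph_app G)"
proof -
  have sv: "single_valued G" using G emb_graph_def by blast
  have "graph_app G 1 = 1" using G K graph_app_eq[OF sv] unfolding emb_graph_def by blast
  moreover have "graph_app G (x + y) = graph_app G x + graph_app G y \<and>
      graph_app G (x * y) = graph_app G x * graph_app G y"
    if "x \<in> Domain G" "y \<in> Domain G" for x y
  proof -
    have "(x, graph_app G x) \<in> G" "(y, graph_app G y) \<in> G" using graph_app_in[OF sv] that by auto
    then have "(x + y, graph_app G x + graph_app G y) \<in> G" "(x * y, graph_app G x * graph_app G y) \<in> G"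
      using G unfolding emb_graph_def by blast+
    then show ?thesis using graph_app_eq[OF sv] by blast
  qed
  ultimately show ?thesis unfolding hom_on_def by blast
qed

definition eval_graph :: "'a::field set \<Rightarrow> ('a \<Rightarrow> 'a) \<Rightarrow> 'a \<Rightarrow> 'a \<Rightarrow> ('a \<times> 'a) set" where
  "eval_graph D \<phi> y y' = {(poly q y, poly (map_poly \<phi> q) y') | q. poly_over D q}"

lemma Domain_eval_graph: "Domain (eval_graph D \<phi> y y') = {poly q y | q. poly_over D q}"
  unfolding eval_graph_def by auto

context
  fixes D :: "'a::field set" and \<phi> :: "'a \<Rightarrow> 'a"
  assumes R: "is_subring D" and h: "hom_on D \<phi>"
begin

lemma eval_graph_const: "x \<in> D \<Longrightarrow> (x, \<phi> x) \<in> eval_graph D \<phi> y y'"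
proof -
  assume "x \<in> D"
  then have "(poly [:x:] y, poly (map_poly \<phi> [:x:]) y') \<in> eval_graph D \<phi> y y'"
    unfolding eval_graph_def using poly_over_const[OF R] by blast
  then show ?thesis by (simp add: map_poly_pCons hom_on_0[OF R h])
qed

lemma eval_graph_X: "(y, y') \<in> eval_graph D \<phi> y y'"
proof -
  have "(poly [:0, 1:] y, poly (map_poly \<phi> [:0, 1:]) y') \<in> eval_graph D \<phi> y y'"
    unfolding eval_graph_def using poly_over_X[OF R] by blast
  then show ?thesis by (simp add: map_poly_pCons hom_on_0[OF R h] hom_on_1[OF h])
qed

lemma eval_graph_add_mult:
  assumes "(x, a) \<in> eval_graph D \<phi> y y'" "(z, b) \<in> eval_graph D \<phi> y y'"
  shows "(x + z, a + b) \<in> eval_graph D \<phi> y y' \<and> (x * z, a * b) \<in> eval_graph D \<phi> y y'"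
proof -
  obtain q1 q2 where q: "poly_over D q1" "x = poly q1 y" "a = poly (map_poly \<phi> q1) y'"
    "poly_over D q2" "z = poly q2 y" "b = poly (map_poly \<phi> q2) y'"
    using assms unfolding eval_graph_def by blast
  have "(poly (q1 + q2) y, poly (map_poly \<phi> (q1 + q2)) y') \<in> eval_graph D \<phi> y y'"
    "(poly (q1 * q2) y, poly (map_poly \<phi> (q1 * q2)) y') \<in> eval_graph D \<phi> y y'"
    unfolding eval_graph_def using poly_over_add[OF R q(1,4)] poly_over_mult[OF R q(1,4)] by blast+
  then show ?thesis
    using map_poly_hom_on_add[OF R h q(1,4)] map_poly_hom_on_mult[OF R h q(1,4)] q by simp
qed

end

text \<open>Two polynomials over \<open>D\<close> with the same value at \<open>y\<close> differ by a multiple of the minimal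
  polynomial \<open>p\<close>, hence have the same image at \<open>y'\<close>.\<close>
lemma single_valued_eval_graph:
  assumes D: "is_subfield D" and h: "hom_on D \<phi>" and mp: "is_minpoly D y p"
    and root: "poly (map_poly \<phi> p) y' = 0"
  shows "single_valued (eval_graph D \<phi> y y')"
proof (rule single_valuedI)
  have R: "is_subring D" using subfield_imp_subring[OF D] .
  have p: "poly_over D p" using mp unfolding is_minpoly_def by blast
  fix x a b assume "(x, a) \<in> eval_graph D \<phi> y y'" "(x, b) \<in> eval_graph D \<phi> y y'"
  then obtain q1 q2 where q: "poly_over D q1" "poly_over D q2" "poly q1 y = poly q2 y"
    and ab: "a = poly (map_poly \<phi> q1) y'" "b = poly (map_poly \<phi> q2) y'"
    unfolding eval_graph_def by auto
  have "poly_over D (q1 - q2)" "poly (q1 - q2) y = 0"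
    using poly_over_diff[OF R q(1,2)] q(3) by simp_all
  then obtain s where s: "poly_over D s" "q1 - q2 = s * p"
    using mp unfolding is_minpoly_def by blast
  have "map_poly \<phi> q1 - map_poly \<phi> q2 = map_poly \<phi> s * map_poly \<phi> p"
    using map_poly_hom_on_diff[OF R h q(1,2)] map_poly_hom_on_mult[OF R h s(1) p] s(2) by simp
  then have "poly (map_poly \<phi> q1) y' - poly (map_poly \<phi> q2) y' = 0"
    using root by (metis poly_diff poly_mult mult_zero_right)
  then show "a = b" using ab by simp
qed

lemma emb_graph_extend_root:
  fixes K :: "'a::field set"
  assumes K: "is_subfield K" and alg: "\<forall>x. algebraic_over K x" and G: "emb_graph K G"
    and mp: "is_minpoly (Domain G) y p" and root: "poly (map_poly (graph_app G) p) y' = 0"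
  shows "\<exists>G'. emb_graph K G' \<and> G \<subseteq> G' \<and> (y, y') \<in> G'"
proof -
  define D where "D = Domain G"
  define \<phi> where "\<phi> = graph_app G"
  define G' where "G' = eval_graph D \<phi> y y'"
  have sv: "single_valued G" using G emb_graph_def by blast
  have Df: "is_subfield D" using G emb_graph_def D_def by blast
  have R: "is_subring D" using subfield_imp_subring[OF Df] .
  have h: "hom_on D \<phi>"
    using emb_graph_hom_on[OF _ G] subring_1[OF subfield_imp_subring[OF K]] D_def \<phi>_def by simp
  have const: "(x, \<phi> x) \<in> G'" if "x \<in> D" for x
    unfolding G'_def using eval_graph_const[OF R h that] .
  have "K \<subseteq> D" using G unfolding emb_graph_def D_def by blast
  then have "K \<subseteq> {poly q y | q. poly_over D q}" using const Domain_eval_graph G'_def by blast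
  then have "is_subfield (Domain G')"
    using subring_algebraic_imp_subfield[OF subring_poly_eval[OF R] _ K] alg
    unfolding G'_def Domain_eval_graph by blast
  moreover have "single_valued G'"
    unfolding G'_def D_def \<phi>_def using single_valued_eval_graph[OF _ _ mp root] Df h D_def \<phi>_def by simp
  moreover have "(x, x) \<in> G'" if "x \<in> K" for x
    using G const graph_app_eq[OF sv] that unfolding emb_graph_def D_def \<phi>_def by fastforce
  ultimately have "emb_graph K G'"
    using eval_graph_add_mult[OF R h] unfolding emb_graph_def G'_def by blast
  moreover have "G \<subseteq> G'"
    using const graph_app_eq[OF sv] unfolding D_def \<phi>_def by fastforce
  moreover have "(y, y') \<in> G'" unfolding G'_def using eval_graph_X[OF R h] .
  ultimately show ?thesis by blast
qed

lemma emb_graph_Union_chain: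
  fixes K :: "'a::field set"
  assumes C: "C \<noteq> {}" "\<And>G. G \<in> C \<Longrightarrow> emb_graph K G" and ch: "chain\<^sub>\<subseteq> C"
  shows "emb_graph K (\<Union>C)"
proof -
  have common: "\<exists>G\<in>C. (x, a) \<in> G \<and> (y, b) \<in> G" if "(x, a) \<in> \<Union>C" "(y, b) \<in> \<Union>C" for x a y b
    using that ch unfolding chain_subset_def by blast
  have "single_valued (\<Union>C)"
    by (rule single_valuedI) (metis C(2) common emb_graph_def single_valuedD)
  moreover have "is_subfield (Domain (\<Union>C))"
    unfolding is_subfield_def
  proof (intro conjI ballI)
    obtain G where "G \<in> C" using C(1) by blast
    then show "0 \<in> Domain (\<Union>C)" "1 \<in> Domain (\<Union>C)"
      using C(2) unfolding emb_graph_def is_subfield_def by blast+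
  next
    fix x assume "x \<in> Domain (\<Union>C)"
    then obtain G where "G \<in> C" "x \<in> Domain G" by blast
    then show "inverse x \<in> Domain (\<Union>C)"
      using C(2) unfolding emb_graph_def is_subfield_def by blast
  next
    fix x y assume "x \<in> Domain (\<Union>C)" "y \<in> Domain (\<Union>C)"
    then obtain G where "G \<in> C" "x \<in> Domain G" "y \<in> Domain G" using common by blast
    then show "x + y \<in> Domain (\<Union>C)" "x - y \<in> Domain (\<Union>C)" "x * y \<in> Domain (\<Union>C)"
      using C(2) unfolding emb_graph_def is_subfield_def by blast+
  qed
  moreover have "(x, x) \<in> \<Union>C" if "x \<in> K" for x
    using C that unfolding emb_graph_def by blast
  moreover have "(x + y, a + b) \<in> \<Union>C \<and> (x * y, a * b) \<in> \<Union>C"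
    if "(x, a) \<in> \<Union>C" "(y, b) \<in> \<Union>C" for x a y b
    using common[OF that] C(2) unfolding emb_graph_def by blast
  ultimately show ?thesis unfolding emb_graph_def by blast
qed

lemma poly_over_coeffs: "poly_over K p \<Longrightarrow> set (coeffs p) \<subseteq> K"
  by (auto simp: coeffs_def poly_over_def)

text \<open>Surjectivity: \<open>\<sigma>\<close> permutes the finitely many roots of each polynomial over \<open>K\<close>.\<close>
lemma algebraic_endomorphism_in_abs_gal:
  fixes \<sigma> :: "'a::field \<Rightarrow> 'a"
  assumes h: "hom_on UNIV \<sigma>" and fixes_K: "\<And>x. x \<in> K \<Longrightarrow> \<sigma> x = x"
    and alg: "\<forall>x. algebraic_over K x"
  shows "\<sigma> \<in> abs_gal K"
proof -
  have R: "is_subring (UNIV :: 'a set)" by (rule subfield_imp_subring[OF subfield_UNIV])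
  have "inj \<sigma>" using hom_on_inj_on[OF subfield_UNIV h] .
  moreover have "t \<in> range \<sigma>" for t
  proof -
    obtain p where p: "p \<noteq> 0" "poly_over K p" "poly p t = 0"
      using alg unfolding algebraic_over_iff_poly_over by blast
    define Z where "Z = {z. poly p z = 0}"
    have "map_poly \<sigma> p = p" using poly_over_coeffs[OF p(2)] fixes_K by (blast intro: map_poly_idI)
    then have "poly p (\<sigma> z) = 0" if "poly p z = 0" for z
      using hom_on_poly[OF R h, of p z] hom_on_0[OF R h] that by (simp add: poly_over_def)
    then have "\<sigma> ` Z \<subseteq> Z" unfolding Z_def by blast
    then have "\<sigma> ` Z = Z"
      using endo_inj_surj[OF poly_roots_finite[OF p(1)]] \<open>inj \<sigma>\<close> inj_on_subset unfolding Z_def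
      by blast
    then show ?thesis using p(3) unfolding Z_def by blast
  qed
  ultimately show ?thesis using h fixes_K unfolding abs_gal_def hom_on_def bij_def by blast
qed

lemma emb_graph_maximal_exists:
  fixes K :: "'a::field set"
  assumes G0: "emb_graph K G0"
  obtains M where "emb_graph K M" "G0 \<subseteq> M" "\<And>G. emb_graph K G \<Longrightarrow> M \<subseteq> G \<Longrightarrow> G = M"
proof -
  define A where "A = {G. emb_graph K G \<and> G0 \<subseteq> G}"
  have "\<forall>C\<in>chains A. \<exists>U\<in>A. \<forall>X\<in>C. X \<subseteq> U"
  proof
    fix C assume "C \<in> chains A"
    then have CA: "C \<subseteq> A" and ch: "chain\<^sub>\<subseteq> C" unfolding chains_def by auto
    show "\<exists>U\<in>A. \<forall>X\<in>C. X \<subseteq> U"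
    proof (cases "C = {}")
      case True
      then show ?thesis using G0 unfolding A_def by blast
    next
      case False
      then have "\<Union>C \<in> A" using emb_graph_Union_chain[OF False _ ch] CA unfolding A_def by blast
      then show ?thesis by blast
    qed
  qed
  from Zorn_Lemma2[OF this] obtain M where "M \<in> A" and max: "\<forall>G\<in>A. M \<subseteq> G \<longrightarrow> G = M"
    by blast
  then show ?thesis using that unfolding A_def by auto
qed

lemma maximal_emb_graph_total:
  fixes K :: "'a::alg_closed_field set"
  assumes K: "is_subfield K" and alg: "\<forall>x. algebraic_over K x" and M: "emb_graph K M"
    and max: "\<And>G. emb_graph K G \<Longrightarrow> M \<subseteq> G \<Longrightarrow> G = M"
  shows "Domain M = UNIV"
proof -
  have sf: "is_subfield (Domain M)" and "K \<subseteq> Domain M"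
    using M unfolding emb_graph_def by blast+
  have h: "hom_on (Domain M) (graph_app M)"
    using emb_graph_hom_on[OF subring_1[OF subfield_imp_subring[OF K]] M] .
  have "y \<in> Domain M" for y
  proof -
    obtain p where mp: "is_minpoly (Domain M) y p"
      using minpoly_exists[OF sf] algebraic_over_mono[OF \<open>K \<subseteq> Domain M\<close>] alg by metis
    have "degree (map_poly (graph_app M) p) = degree p"
      using degree_map_poly_hom_on_monic[OF subfield_imp_subring[OF sf] h] mp
      unfolding is_minpoly_def by blast
    then have "0 < degree (map_poly (graph_app M) p)" using degree_minpoly_pos[OF mp] by simp
    then obtain y' where "poly (map_poly (graph_app M) p) y' = 0"
      using alg_closed_imp_poly_has_root by blast
    then obtain G' where "emb_graph K G'" "M \<subseteq> G'" "(y, y') \<in> G'"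
      using emb_graph_extend_root[OF K alg M mp] by blast
    then show ?thesis using max by blast
  qed
  then show ?thesis by blast
qed

lemma emb_graph_extends_to_abs_gal:
  fixes K :: "'a::alg_closed_field set"
  assumes K: "is_subfield K" and alg: "\<forall>x. algebraic_over K x" and G0: "emb_graph K G0"
  obtains \<sigma> where "\<sigma> \<in> abs_gal K" "\<And>x a. (x, a) \<in> G0 \<Longrightarrow> \<sigma> x = a"
proof -
  obtain M where M: "emb_graph K M" "G0 \<subseteq> M" and max: "\<And>G. emb_graph K G \<Longrightarrow> M \<subseteq> G \<Longrightarrow> G = M"
    using emb_graph_maximal_exists[OF G0] by blast
  have sv: "single_valued M" using M(1) unfolding emb_graph_def by blast
  have "hom_on UNIV (graph_app M)"
    using emb_graph_hom_on[OF subring_1[OF subfield_imp_subring[OF K]] M(1)]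
      maximal_emb_graph_total[OF K alg M(1) max] by simp
  moreover have "graph_app M x = x" if "x \<in> K" for x
    using M(1) graph_app_eq[OF sv] that unfolding emb_graph_def by blast
  ultimately have "graph_app M \<in> abs_gal K"
    using algebraic_endomorphism_in_abs_gal[OF _ _ alg] by blast
  then show ?thesis using that M(2) graph_app_eq[OF sv] by blast
qed

text \<open>The only use of characteristic 0: a minimal polynomial \<open>(X - u)\<^sup>d\<close> with \<open>d \<ge> 2\<close> would
  divide its derivative, which is nonzero and of smaller degree.\<close>
lemma minpoly_other_root:
  fixes K :: "'a::{alg_closed_field, field_char_0} set"
  assumes K: "is_subfield K" and mp: "is_minpoly K u p" and uK: "u \<notin> K"
  shows "\<exists>v. poly p v = 0 \<and> v \<noteq> u"
proof (rule ccontr)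
  assume nov: "\<nexists>v. poly p v = 0 \<and> v \<noteq> u"
  have R: "is_subring K" using subfield_imp_subring[OF K] .
  have p: "poly_over K p" and pmon: "lead_coeff p = 1" and pu: "poly p u = 0"
    and pdvd: "\<And>q. poly_over K q \<Longrightarrow> poly q u = 0 \<Longrightarrow> \<exists>s. poly_over K s \<and> q = s * p"
    using mp unfolding is_minpoly_def by blast+
  obtain r where pr: "p = [:-u, 1:] * r" using pu poly_eq_0_iff_dvd by (metis dvdE)
  have "r \<noteq> 0" using pr pmon by auto
  then have "degree ([:-u, 1:] * r) = degree [:-u, 1:] + degree r" by (intro degree_mult_eq) auto
  then have dpr: "degree p = Suc (degree r)" using pr by simp
  show False
  proof (cases "degree r = 0")
    case True
    then obtain c where "r = [:c:]" by (metis degree_eq_zeroE)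
    moreover have "lead_coeff p = c" using pr \<open>r = [:c:]\<close> by (simp add: lead_coeff_mult)
    ultimately have "coeff p 0 = - u" using pr pmon by simp
    then have "- u \<in> K" using p unfolding poly_over_def by metis
    then show False using uK subring_uminus[OF R] by fastforce
  next
    case False
    then obtain v where "poly r v = 0" using alg_closed_imp_poly_has_root by blast
    then have "poly r u = 0" using nov pr by auto
    then obtain s where "r = [:-u, 1:] * s" using poly_eq_0_iff_dvd by (metis dvdE)
    then have "poly (pderiv p) u = 0" unfolding pr pderiv_mult by simp
    then obtain s' where s': "pderiv p = s' * p"
      using pdvd[OF poly_over_pderiv[OF R p]] by blast
    have "pderiv p \<noteq> 0" using dpr pderiv_eq_0_iff[of p] by simp
    then have "s' \<noteq> 0" using s' by auto
    then have "degree p \<le> degree (pderiv p)"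
      using degree_mult_right_le[of s' p] s' by (simp add: mult.commute)
    then show False using dpr degree_pderiv[of p] by simp
  qed
qed

lemma emb_graph_Id_on:
  assumes K: "is_subfield K"
  shows "emb_graph K (Id_on K)"
proof -
  have "single_valued (Id_on K)" by (simp add: single_valued_def Id_on_def)
  moreover have "Domain (Id_on K) = K" by auto
  moreover have "(x + y, a + b) \<in> Id_on K \<and> (x * y, a * b) \<in> Id_on K"
    if "(x, a) \<in> Id_on K" "(y, b) \<in> Id_on K" for x a y b
    using that K unfolding is_subfield_def by auto
  ultimately show ?thesis unfolding emb_graph_def using K by auto
qed

lemma abs_gal_fixed_field:
  fixes K :: "'a::{alg_closed_field, field_char_0} set"
  assumes K: "is_subfield K" and alg: "\<forall>x. algebraic_over K x"
    and fixed: "\<And>\<sigma>. \<sigma> \<in> abs_gal K \<Longrightarrow> \<sigma> u = u"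
  shows "u \<in> K"
proof (rule ccontr)
  assume uK: "u \<notin> K"
  obtain p where mp: "is_minpoly K u p" using minpoly_exists[OF K] alg by blast
  obtain v where v: "poly p v = 0" "v \<noteq> u" using minpoly_other_root[OF K mp uK] by blast
  have "map_poly (graph_app (Id_on K)) p = p"
    using poly_over_coeffs[of K p] mp graph_app_eq[of "Id_on K"]
    unfolding is_minpoly_def single_valued_def by (blast intro: map_poly_idI)
  then obtain G where "emb_graph K G" "(u, v) \<in> G"
    using emb_graph_extend_root[OF K alg emb_graph_Id_on[OF K], of u p v] mp v by auto
  then obtain \<sigma> where "\<sigma> \<in> abs_gal K" "\<sigma> u = v"
    using emb_graph_extends_to_abs_gal[OF K alg] by metis
  then show False using fixed v(2) by metis
qed

section \<open>Cyclotomic extensions and their Galois groups\<close>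

lemma subfield_Inter: "(\<And>F. F \<in> A \<Longrightarrow> is_subfield F) \<Longrightarrow> is_subfield (\<Inter>A)"
  unfolding is_subfield_def by blast

lemma field_gen_subfield: "is_subfield (field_gen S)"
  unfolding field_gen_def by (rule subfield_Inter) blast

lemma field_gen_subset: "S \<subseteq> field_gen S"
  unfolding field_gen_def by auto

lemma field_gen_least: "is_subfield F \<Longrightarrow> S \<subseteq> F \<Longrightarrow> field_gen S \<subseteq> F"
  unfolding field_gen_def by auto

lemma subfield_equalizer:
  assumes E: "is_subfield E" and g: "hom_on E g" and h: "hom_on E h"
  shows "is_subfield {x \<in> E. g x = h x}"
proof -
  have R: "is_subring E" using subfield_imp_subring[OF E] .
  show ?thesis
    unfolding is_subfield_def
    using R hom_on_0[OF R g] hom_on_0[OF R h] hom_on_1[OF g] hom_on_1[OF h]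
      hom_on_add[OF g] hom_on_add[OF h] hom_on_diff[OF R g] hom_on_diff[OF R h]
      hom_on_mult[OF g] hom_on_mult[OF h] hom_on_inverse[OF E g] hom_on_inverse[OF E h]
      subfield_inverse[OF E]
    by (simp add: subring_0 subring_1 subring_add subring_diff subring_mult)
qed

lemma subfield_preimage:
  fixes \<sigma> :: "'a::field \<Rightarrow> 'a"
  assumes h: "hom_on UNIV \<sigma>" and E: "is_subfield E"
  shows "is_subfield {x. \<sigma> x \<in> E}"
proof -
  have R: "is_subring (UNIV :: 'a set)" by (rule subfield_imp_subring[OF subfield_UNIV])
  show ?thesis
    using E hom_on_0[OF R h] hom_on_1[OF h] hom_on_add[OF h] hom_on_diff[OF R h]
      hom_on_mult[OF h] hom_on_inverse[OF subfield_UNIV h]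
    unfolding is_subfield_def by simp
qed

lemma mu_finite: "0 < m \<Longrightarrow> finite (mu m :: 'a::field set)"
proof -
  assume m: "0 < m"
  define p :: "'a poly" where "p = monom 1 m - 1"
  have "coeff p m = 1" using m unfolding p_def by simp
  then have "p \<noteq> 0" by auto
  moreover have "mu m = {z. poly p z = 0}" unfolding p_def mu_def by (simp add: poly_monom)
  ultimately show ?thesis using poly_roots_finite[of p] by simp
qed

lemma mu_nonzero: "0 < m \<Longrightarrow> z \<in> mu m \<Longrightarrow> z \<noteq> 0"
  unfolding mu_def by (cases "z = 0") (simp_all add: zero_power)

lemma hom_on_mu:
  assumes E: "is_subfield E" and h: "hom_on E g" and z: "z \<in> E" "z \<in> mu m"
  shows "g z \<in> mu m"
proof -
  have "g z ^ m = g (z ^ m)" using hom_on_power[OF subfield_imp_subring[OF E] h z(1)] by simp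
  also have "\<dots> = 1" using z(2) hom_on_1[OF h] unfolding mu_def by simp
  finally show ?thesis unfolding mu_def by simp
qed

lemma cyc_subfield: "is_subfield (cyc K m)"
  unfolding cyc_def by (rule field_gen_subfield)

lemma subset_cyc: "K \<subseteq> cyc K m"
  unfolding cyc_def using field_gen_subset by blast

lemma mu_subset_cyc: "mu m \<subseteq> cyc K m"
  unfolding cyc_def using field_gen_subset by blast

lemma cyc_least: "is_subfield F \<Longrightarrow> K \<subseteq> F \<Longrightarrow> mu m \<subseteq> F \<Longrightarrow> cyc K m \<subseteq> F"
  unfolding cyc_def by (simp add: field_gen_least)

lemma abs_gal_hom_on: "\<sigma> \<in> abs_gal K \<Longrightarrow> hom_on UNIV \<sigma>"
  unfolding abs_gal_def hom_on_def by auto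

lemma abs_gal_fixes: "\<sigma> \<in> abs_gal K \<Longrightarrow> x \<in> K \<Longrightarrow> \<sigma> x = x"
  unfolding abs_gal_def by auto

lemma abs_gal_inv:
  assumes \<sigma>: "\<sigma> \<in> abs_gal K"
  shows "inv \<sigma> \<in> abs_gal K"
proof -
  have b: "bij \<sigma>" using \<sigma> unfolding abs_gal_def by blast
  have h: "hom_on UNIV \<sigma>" using abs_gal_hom_on[OF \<sigma>] .
  have inv_\<sigma>: "inv \<sigma> (\<sigma> x) = x" for x using b by (simp add: bij_is_inj)
  have \<sigma>_inv: "\<sigma> (inv \<sigma> x) = x" for x using b by (simp add: bij_is_surj surj_f_inv_f)
  have "inv \<sigma> (x + y) = inv \<sigma> x + inv \<sigma> y" "inv \<sigma> (x * y) = inv \<sigma> x * inv \<sigma> y" for x y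
    using hom_on_add[OF h, of "inv \<sigma> x" "inv \<sigma> y"] hom_on_mult[OF h, of "inv \<sigma> x" "inv \<sigma> y"]
      \<sigma>_inv inv_\<sigma> by (metis UNIV_I)+
  moreover have "inv \<sigma> 1 = 1" using hom_on_1[OF h] inv_\<sigma> by metis
  moreover have "inv \<sigma> x = x" if "x \<in> K" for x using abs_gal_fixes[OF \<sigma> that] inv_\<sigma> by metis
  moreover have "bij (inv \<sigma>)" using b by (simp add: bij_imp_bij_inv)
  ultimately show ?thesis unfolding abs_gal_def by blast
qed

lemma abs_gal_maps_cyc:
  assumes \<sigma>: "\<sigma> \<in> abs_gal K" and x: "x \<in> cyc K m"
  shows "\<sigma> x \<in> cyc K m"
proof -
  have h: "hom_on UNIV \<sigma>" using abs_gal_hom_on[OF \<sigma>] .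
  have "K \<subseteq> {x. \<sigma> x \<in> cyc K m}" using abs_gal_fixes[OF \<sigma>] subset_cyc by fastforce
  moreover have "mu m \<subseteq> {x. \<sigma> x \<in> cyc K m}"
    using hom_on_mu[OF subfield_UNIV h] mu_subset_cyc by fastforce
  ultimately have "cyc K m \<subseteq> {x. \<sigma> x \<in> cyc K m}"
    by (rule cyc_least[OF subfield_preimage[OF h cyc_subfield]])
  then show ?thesis using x by blast
qed

lemma gal_cyc_iff:
  "g \<in> gal_cyc K m \<longleftrightarrow> g \<in> extensional (cyc K m) \<and> bij_betw g (cyc K m) (cyc K m) \<and>
     hom_on (cyc K m) g \<and> (\<forall>x\<in>K. g x = x)"
  unfolding gal_cyc_def hom_on_def by blast

lemma restrict_abs_gal_in_gal_cyc:
  assumes \<sigma>: "\<sigma> \<in> abs_gal K"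
  shows "restrict \<sigma> (cyc K m) \<in> gal_cyc K m"
proof -
  let ?E = "cyc K m"
  have b: "bij \<sigma>" using \<sigma> unfolding abs_gal_def by blast
  have "\<sigma> ` ?E = ?E"
  proof
    show "\<sigma> ` ?E \<subseteq> ?E" using abs_gal_maps_cyc[OF \<sigma>] by blast
    have "\<sigma> (inv \<sigma> x) = x" for x using b by (simp add: bij_is_surj surj_f_inv_f)
    then show "?E \<subseteq> \<sigma> ` ?E" using abs_gal_maps_cyc[OF abs_gal_inv[OF \<sigma>]] by (metis image_eqI subsetI)
  qed
  moreover have "inj_on \<sigma> ?E" by (rule inj_on_subset[OF bij_is_inj[OF b] subset_UNIV])
  ultimately have "bij_betw \<sigma> ?E ?E" unfolding bij_betw_def by blast
  then have "bij_betw (restrict \<sigma> ?E) ?E ?E"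
    using bij_betw_cong[of ?E "restrict \<sigma> ?E" \<sigma> ?E] by simp
  moreover have "hom_on ?E (restrict \<sigma> ?E)"
  proof -
    have R: "is_subring ?E" using subfield_imp_subring[OF cyc_subfield] .
    have h: "hom_on UNIV \<sigma>" using abs_gal_hom_on[OF \<sigma>] .
    show ?thesis
      unfolding hom_on_def
      using subring_1[OF R] subring_add[OF R] subring_mult[OF R] hom_on_1[OF h]
        hom_on_add[OF h] hom_on_mult[OF h]
      by simp
  qed
  ultimately show ?thesis
    using subset_cyc abs_gal_fixes[OF \<sigma>] unfolding gal_cyc_iff by auto
qed

lemma gal_cyc_hom_on: "g \<in> gal_cyc K m \<Longrightarrow> hom_on (cyc K m) g"
  and gal_cyc_fixes: "g \<in> gal_cyc K m \<Longrightarrow> x \<in> K \<Longrightarrow> g x = x"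
  and gal_cyc_bij: "g \<in> gal_cyc K m \<Longrightarrow> bij_betw g (cyc K m) (cyc K m)"
  by (simp_all add: gal_cyc_iff)

lemma gal_cyc_maps: "g \<in> gal_cyc K m \<Longrightarrow> x \<in> cyc K m \<Longrightarrow> g x \<in> cyc K m"
  using gal_cyc_bij bij_betwE by blast

lemma gal_cyc_mu: "g \<in> gal_cyc K m \<Longrightarrow> z \<in> mu m \<Longrightarrow> g z \<in> mu m"
  using hom_on_mu[OF cyc_subfield gal_cyc_hom_on] mu_subset_cyc by blast

lemma gal_cyc_eqI:
  "g \<in> gal_cyc K m \<Longrightarrow> h \<in> gal_cyc K m \<Longrightarrow> (\<And>x. x \<in> cyc K m \<Longrightarrow> g x = h x) \<Longrightarrow> g = h"
  using extensionalityI[of g "cyc K m" h] unfolding gal_cyc_iff by blast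

lemma gal_cyc_comp_apply: "x \<in> cyc K m \<Longrightarrow> gal_cyc_comp K m g h x = g (h x)"
  unfolding gal_cyc_comp_def by simp

lemma gal_cyc_comp_closed:
  assumes g: "g \<in> gal_cyc K m" and h: "h \<in> gal_cyc K m"
  shows "gal_cyc_comp K m g h \<in> gal_cyc K m"
proof -
  let ?E = "cyc K m" and ?c = "gal_cyc_comp K m g h"
  have R: "is_subring ?E" using subfield_imp_subring[OF cyc_subfield] .
  have hg: "hom_on ?E g" and hh: "hom_on ?E h" using gal_cyc_hom_on g h by blast+
  have "bij_betw (g \<circ> h) ?E ?E" using bij_betw_trans[OF gal_cyc_bij[OF h] gal_cyc_bij[OF g]] .
  then have "bij_betw ?c ?E ?E"
    using bij_betw_cong[of ?E ?c "g \<circ> h" ?E] by (simp add: gal_cyc_comp_apply)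
  moreover have "hom_on ?E ?c"
    unfolding hom_on_def gal_cyc_comp_def
    using subring_1[OF R] subring_add[OF R] subring_mult[OF R]
      hom_on_1[OF hg] hom_on_1[OF hh] hom_on_add[OF hg] hom_on_add[OF hh]
      hom_on_mult[OF hg] hom_on_mult[OF hh] gal_cyc_maps[OF h]
    by simp
  moreover have "?c x = x" if "x \<in> K" for x
    using that subset_cyc gal_cyc_comp_apply gal_cyc_fixes[OF g] gal_cyc_fixes[OF h] by (metis subsetD)
  ultimately show ?thesis unfolding gal_cyc_iff gal_cyc_comp_def by simp
qed

lemma restrict_id_in_gal_cyc: "restrict id (cyc K m) \<in> gal_cyc K m"
proof -
  have R: "is_subring (cyc K m)" using subfield_imp_subring[OF cyc_subfield] .
  have "bij_betw (restrict id (cyc K m)) (cyc K m) (cyc K m)"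
    using bij_betw_cong[of "cyc K m" "restrict id (cyc K m)" id "cyc K m"] by simp
  moreover have "hom_on (cyc K m) (restrict id (cyc K m))"
    unfolding hom_on_def using subring_1[OF R] subring_add[OF R] subring_mult[OF R] by simp
  ultimately show ?thesis using subset_cyc unfolding gal_cyc_iff by auto
qed

lemma gal_cyc_eq_on_mu:
  assumes g: "g \<in> gal_cyc K m" and h: "h \<in> gal_cyc K m" and eq: "\<And>z. z \<in> mu m \<Longrightarrow> g z = h z"
  shows "g = h"
proof -
  have "K \<subseteq> {x \<in> cyc K m. g x = h x}"
    using subset_cyc[of K m] gal_cyc_fixes[OF g] gal_cyc_fixes[OF h] by auto
  moreover have "mu m \<subseteq> {x \<in> cyc K m. g x = h x}" using mu_subset_cyc[of m K] eq by auto
  ultimately have "cyc K m \<subseteq> {x \<in> cyc K m. g x = h x}"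
    by (rule cyc_least[OF subfield_equalizer[OF cyc_subfield gal_cyc_hom_on[OF g] gal_cyc_hom_on[OF h]]])
  then show ?thesis using gal_cyc_eqI[OF g h] by blast
qed

lemma finite_gal_cyc:
  assumes m: "0 < m"
  shows "finite (gal_cyc K m)"
proof -
  let ?r = "\<lambda>g. restrict g (mu m)"
  have "inj_on ?r (gal_cyc K m)"
  proof (rule inj_onI)
    fix g h assume g: "g \<in> gal_cyc K m" and h: "h \<in> gal_cyc K m" and "?r g = ?r h"
    then have "g z = h z" if "z \<in> mu m" for z using that by (metis restrict_apply')
    then show "g = h" by (rule gal_cyc_eq_on_mu[OF g h])
  qed
  moreover have "?r ` gal_cyc K m \<subseteq> Pi\<^sub>E (mu m) (\<lambda>_. mu m)"
    using gal_cyc_mu by auto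
  moreover have "finite (Pi\<^sub>E (mu m) (\<lambda>_. mu m))" by (intro finite_PiE mu_finite[OF m])
  ultimately show ?thesis using finite_imageD finite_subset by blast
qed


section \<open>Hilbert 90 and Kummer theory for groups of automorphisms\<close>

text \<open>Subtracting \<open>\<tau>\<^sub>0(h)\<close> times a linear relation among \<open>\<tau>\<^sub>0, \<tau>\<^sub>1, \<dots>\<close> from the same relation
  evaluated at \<open>h\<gamma>\<close> eliminates \<open>\<tau>\<^sub>0\<close>.\<close>
lemma hom_relation_eliminate:
  fixes E :: "'a::field set"
  assumes E: "is_subfield E" and hom: "\<forall>\<tau>\<in>insert \<tau>0 T. hom_on E \<tau>"
    and rel: "\<And>\<gamma>. \<gamma> \<in> E \<Longrightarrow> a \<tau>0 * \<tau>0 \<gamma> + (\<Sum>\<tau>\<in>T. a \<tau> * \<tau> \<gamma>) = 0"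
    and h: "h \<in> E" and \<gamma>: "\<gamma> \<in> E"
  shows "(\<Sum>\<tau>\<in>T. a \<tau> * (\<tau> h - \<tau>0 h) * \<tau> \<gamma>) = 0"
proof -
  have "\<tau> (h * \<gamma>) = \<tau> h * \<tau> \<gamma>" if "\<tau> \<in> insert \<tau>0 T" for \<tau>
    using hom_on_mult[OF _ h \<gamma>] hom that by blast
  then have e1: "a \<tau>0 * (\<tau>0 h * \<tau>0 \<gamma>) + (\<Sum>\<tau>\<in>T. a \<tau> * (\<tau> h * \<tau> \<gamma>)) = 0"
      (is "?P + ?A = 0")
    using rel[OF subring_mult[OF subfield_imp_subring[OF E] h \<gamma>]] by simp
  have e2: "a \<tau>0 * (\<tau>0 h * \<tau>0 \<gamma>) + (\<Sum>\<tau>\<in>T. \<tau>0 h * (a \<tau> * \<tau> \<gamma>)) = 0"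
      (is "_ + ?B = 0")
    using arg_cong[OF rel[OF \<gamma>], of "(*) (\<tau>0 h)"]
    by (simp add: distrib_left sum_distrib_left mult.left_commute)
  have "(\<Sum>\<tau>\<in>T. a \<tau> * (\<tau> h - \<tau>0 h) * \<tau> \<gamma>) = (\<Sum>\<tau>\<in>T. a \<tau> * (\<tau> h * \<tau> \<gamma>) - \<tau>0 h * (a \<tau> * \<tau> \<gamma>))"
    by (rule sum.cong) (simp_all add: algebra_simps)
  also have "\<dots> = ?A - ?B" by (simp only: sum_subtractf)
  also have "\<dots> = (?P + ?A) - (?P + ?B)" by simp
  also have "\<dots> = 0" using e1 e2 by simp
  finally show ?thesis .
qed

lemma dedekind_independence:
  fixes E :: "'a::field set" and T :: "('a \<Rightarrow> 'a) set"
  assumes E: "is_subfield E" and fin: "finite T" and hom: "\<forall>\<tau>\<in>T. hom_on E \<tau>"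
    and dist: "\<forall>\<tau>1\<in>T. \<forall>\<tau>2\<in>T. \<tau>1 \<noteq> \<tau>2 \<longrightarrow> (\<exists>x\<in>E. \<tau>1 x \<noteq> \<tau>2 x)"
    and zero: "\<forall>\<gamma>\<in>E. (\<Sum>\<tau>\<in>T. a \<tau> * \<tau> \<gamma>) = 0"
  shows "\<forall>\<tau>\<in>T. a \<tau> = 0"
  using fin hom dist zero
proof (induction T arbitrary: a rule: finite_induct)
  case empty
  then show ?case by simp
next
  case (insert \<tau>0 T)
  have rel: "a \<tau>0 * \<tau>0 \<gamma> + (\<Sum>\<tau>\<in>T. a \<tau> * \<tau> \<gamma>) = 0" if "\<gamma> \<in> E" for \<gamma>
    using insert.prems(3) that insert.hyps by simp
  have shorter: "\<forall>\<tau>\<in>T. a \<tau> * (\<tau> h - \<tau>0 h) = 0" if h: "h \<in> E" for h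
    by (rule insert.IH)
      (use insert.prems hom_relation_eliminate[OF E insert.prems(1) rel h] in blast)+
  have aT: "a \<tau> = 0" if "\<tau> \<in> T" for \<tau>
  proof -
    have "\<tau> \<noteq> \<tau>0" using that insert.hyps(2) by auto
    moreover have "\<tau> \<in> insert \<tau>0 T" "\<tau>0 \<in> insert \<tau>0 T" using that by auto
    ultimately obtain h where h: "h \<in> E" "\<tau> h \<noteq> \<tau>0 h"
      using insert.prems(2) by blast
    have "a \<tau> * (\<tau> h - \<tau>0 h) = 0" by (rule bspec[OF shorter[OF h(1)] that])
    then show ?thesis using h(2) by simp
  qed
  have "a \<tau>0 * \<tau>0 1 + (\<Sum>\<tau>\<in>T. a \<tau> * \<tau> 1) = 0"
    using rel subring_1[OF subfield_imp_subring[OF E]] by blast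
  then have "a \<tau>0 = 0" using aT hom_on_1[of E \<tau>0] insert.prems(1) by simp
  then show ?case using aT by blast
qed

lemma cohomologous_cong:
  "(\<And>g. g \<in> G \<Longrightarrow> f g = f' g) \<Longrightarrow> cohomologous G act M f c \<longleftrightarrow> cohomologous G act M f' c"
  unfolding cohomologous_def by simp

text \<open>Covers both \<open>Gal(K(\<zeta>\<^sub>m)/K)\<close>, whose composition \<open>gop\<close> restricts to \<open>K(\<zeta>\<^sub>m)\<close>, and the
  absolute Galois group acting on the whole algebraic closure.\<close>
locale aut_action =
  fixes K E :: "'a::field set" and G :: "('a \<Rightarrow> 'a) set"
    and gop :: "('a \<Rightarrow> 'a) \<Rightarrow> ('a \<Rightarrow> 'a) \<Rightarrow> 'a \<Rightarrow> 'a"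
  assumes subfield: "is_subfield E"
    and hom: "g \<in> G \<Longrightarrow> hom_on E g"
    and maps: "g \<in> G \<Longrightarrow> x \<in> E \<Longrightarrow> g x \<in> E"
    and fixes_K: "g \<in> G \<Longrightarrow> x \<in> K \<Longrightarrow> g x = x"
    and gop_apply: "g \<in> G \<Longrightarrow> h \<in> G \<Longrightarrow> x \<in> E \<Longrightarrow> gop g h x = g (h x)"
begin

lemma nonzero: "g \<in> G \<Longrightarrow> x \<in> E \<Longrightarrow> x \<noteq> 0 \<Longrightarrow> g x \<noteq> 0"
  using hom_on_nonzero[OF subfield hom] by blast

lemma divide: "g \<in> G \<Longrightarrow> x \<in> E \<Longrightarrow> y \<in> E \<Longrightarrow> g (x / y) = g x / g y"
  using hom_on_divide[OF subfield hom] by blast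

lemma inj_on: "g \<in> G \<Longrightarrow> inj_on g E"
  using hom_on_inj_on[OF subfield hom] by blast

lemma power: "g \<in> G \<Longrightarrow> x \<in> E \<Longrightarrow> g (x ^ n) = g x ^ n"
  using hom_on_power[OF subfield_imp_subring[OF subfield] hom] by blast

lemma coboundary_cocycle:
  assumes \<alpha>: "\<alpha> \<in> E" "\<alpha> \<noteq> 0" "\<alpha> ^ L \<in> K"
  shows "cocycle gop G (\<lambda>g. g) (mu L) (\<lambda>g. g \<alpha> / \<alpha>)"
  unfolding cocycle_def
proof (intro conjI ballI)
  fix g assume g: "g \<in> G"
  have "(g \<alpha> / \<alpha>) ^ L = g (\<alpha> ^ L) / \<alpha> ^ L" using power[OF g \<alpha>(1)] by (simp add: power_divide)
  then show "g \<alpha> / \<alpha> \<in> mu L" using fixes_K[OF g \<alpha>(3)] \<alpha>(2) unfolding mu_def by simp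
  fix h assume h: "h \<in> G"
  show "gop g h \<alpha> / \<alpha> = g \<alpha> / \<alpha> * g (h \<alpha> / \<alpha>)"
    using gop_apply[OF g h \<alpha>(1)] divide[OF g maps[OF h \<alpha>(1)] \<alpha>(1)] nonzero[OF g \<alpha>(1,2)] by simp
qed

lemma coboundary_cohomologous:
  assumes \<alpha>: "\<alpha> \<in> E" "\<alpha> \<noteq> 0" and \<eta>: "\<eta> \<in> E" "\<eta> \<noteq> 0" "\<eta> \<in> M"
  shows "cohomologous G (\<lambda>g. g) M (\<lambda>g. g \<alpha> / \<alpha>) (\<lambda>g. g (\<alpha> / \<eta>) / (\<alpha> / \<eta>))"
  unfolding cohomologous_def
proof (intro bexI[of _ \<eta>] ballI)
  fix g assume g: "g \<in> G"
  show "g \<alpha> / \<alpha> = g (\<alpha> / \<eta>) / (\<alpha> / \<eta>) * (g \<eta> / \<eta>)"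
    using divide[OF g \<alpha>(1) \<eta>(1)] nonzero[OF g \<eta>(1,2)] \<alpha>(2) \<eta>(2) by simp
qed (rule \<eta>(3))

end

locale finite_aut_group = aut_action +
  assumes finite: "finite G" and nonempty: "G \<noteq> {}"
    and gop_closed: "g \<in> G \<Longrightarrow> h \<in> G \<Longrightarrow> gop g h \<in> G"
    and eqI: "g \<in> G \<Longrightarrow> h \<in> G \<Longrightarrow> (\<And>x. x \<in> E \<Longrightarrow> g x = h x) \<Longrightarrow> g = h"
begin

lemma sum_gop_reindex:
  assumes g: "g \<in> G"
  shows "(\<Sum>\<tau>\<in>G. F (gop g \<tau>)) = (\<Sum>\<tau>\<in>G. F \<tau>)"
proof -
  have inj: "inj_on (gop g) G"
  proof (rule inj_onI)
    fix t1 t2 assume t: "t1 \<in> G" "t2 \<in> G" and "gop g t1 = gop g t2"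
    then have "g (t1 x) = g (t2 x)" if "x \<in> E" for x using that gop_apply[OF g] by metis
    then have "t1 x = t2 x" if "x \<in> E" for x
      using that inj_onD[OF inj_on[OF g]] maps[OF t(1)] maps[OF t(2)] by blast
    then show "t1 = t2" using eqI[OF t] by blast
  qed
  then have "gop g ` G = G" using endo_inj_surj[OF finite] gop_closed[OF g] by blast
  then show ?thesis using sum.reindex[OF inj, of F] by simp
qed

text \<open>Hilbert's Theorem 90: with \<open>b = \<Sum>\<^sub>\<tau> f(\<tau>) \<tau>(\<gamma>)\<close>, nonzero for some \<open>\<gamma>\<close> by Dedekind's
  lemma, the cocycle relation gives \<open>g(b) = b / f(g)\<close>.\<close>
lemma hilbert90:
  assumes f: "cocycle gop G (\<lambda>g. g) (E - {0}) f"
  obtains \<beta> where "\<beta> \<in> E" "\<beta> \<noteq> 0" "\<And>g. g \<in> G \<Longrightarrow> f g = g \<beta> / \<beta>"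
proof -
  have fE: "f g \<in> E" "f g \<noteq> 0" if "g \<in> G" for g using f that unfolding cocycle_def by blast+
  have fco: "f (gop g h) = f g * g (f h)" if "g \<in> G" "h \<in> G" for g h
    using f that unfolding cocycle_def by blast
  obtain \<gamma> where \<gamma>: "\<gamma> \<in> E" and b_nz: "(\<Sum>\<tau>\<in>G. f \<tau> * \<tau> \<gamma>) \<noteq> 0"
  proof -
    have "\<forall>\<tau>1\<in>G. \<forall>\<tau>2\<in>G. \<tau>1 \<noteq> \<tau>2 \<longrightarrow> (\<exists>x\<in>E. \<tau>1 x \<noteq> \<tau>2 x)" using eqI by blast
    then have "\<not> (\<forall>\<gamma>\<in>E. (\<Sum>\<tau>\<in>G. f \<tau> * \<tau> \<gamma>) = 0)"
      using dedekind_independence[OF subfield finite] hom nonempty fE by blast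
    then show ?thesis using that by blast
  qed
  define b where "b = (\<Sum>\<tau>\<in>G. f \<tau> * \<tau> \<gamma>)"
  have R: "is_subring E" using subfield_imp_subring[OF subfield] .
  have term_E: "f \<tau> * \<tau> \<gamma> \<in> E" if "\<tau> \<in> G" for \<tau>
    using subring_mult[OF R fE(1)[OF that] maps[OF that \<gamma>]] .
  have bE: "b \<in> E" unfolding b_def by (rule subring_sum[OF R term_E])
  have act: "g b = b / f g" if g: "g \<in> G" for g
  proof -
    have "g b = (\<Sum>\<tau>\<in>G. g (f \<tau> * \<tau> \<gamma>))"
      unfolding b_def using hom_on_sum[OF R hom[OF g] term_E] .
    also have "\<dots> = (\<Sum>\<tau>\<in>G. g (f \<tau>) * g (\<tau> \<gamma>))"
      using hom_on_mult[OF hom[OF g] fE(1) maps[OF _ \<gamma>]] by simp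
    also have "\<dots> = (\<Sum>\<tau>\<in>G. f (gop g \<tau>) * gop g \<tau> \<gamma>) / f g"
      unfolding sum_divide_distrib
      using fco[OF g] fE(2)[OF g] gop_apply[OF g _ \<gamma>] by (intro sum.cong) (simp_all add: field_simps)
    also have "\<dots> = b / f g"
      unfolding b_def using sum_gop_reindex[OF g, of "\<lambda>\<tau>. f \<tau> * \<tau> \<gamma>"] by simp
    finally show ?thesis .
  qed
  have "b \<noteq> 0" using b_nz unfolding b_def .
  have "f g = g (inverse b) / inverse b" if g: "g \<in> G" for g
    using hom_on_inverse[OF subfield hom[OF g] bE] act[OF g] fE(2)[OF g] \<open>b \<noteq> 0\<close>
    by (simp add: field_simps)
  then show ?thesis using that subfield_inverse[OF subfield bE] \<open>b \<noteq> 0\<close> by simp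
qed

end

locale galois_action = aut_action +
  assumes fixed_field: "x \<in> E \<Longrightarrow> (\<And>g. g \<in> G \<Longrightarrow> g x = x) \<Longrightarrow> x \<in> K"
begin

lemma power_in_fixed_field:
  assumes w: "w \<in> E" and c: "\<And>g. g \<in> G \<Longrightarrow> g w = c g * w" "\<And>g. g \<in> G \<Longrightarrow> c g \<in> mu L"
  shows "w ^ L \<in> K"
proof (rule fixed_field)
  show "w ^ L \<in> E" using subring_power[OF subfield_imp_subring[OF subfield] w] .
  fix g assume g: "g \<in> G"
  show "g (w ^ L) = w ^ L"
    using power[OF g w] c[OF g] unfolding mu_def by (simp add: power_mult_distrib)
qed

lemma coboundary_power_in_fixed_field:
  assumes \<beta>: "\<beta> \<in> E" "\<beta> \<noteq> 0" and mu: "\<And>g. g \<in> G \<Longrightarrow> g \<beta> / \<beta> \<in> mu N"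
  shows "\<beta> ^ N \<in> K"
  by (rule power_in_fixed_field[OF \<beta>(1) _ mu]) (use \<beta>(2) in simp)

lemma cohomologous_coboundary_root:
  assumes y: "y \<in> E" "y \<noteq> 0" and M: "M \<subseteq> E - {0}"
    and coh: "cohomologous G (\<lambda>g. g) M (\<lambda>g. g y / y) c" and c: "\<And>g. g \<in> G \<Longrightarrow> c g \<in> mu L"
  obtains b where "b \<in> M" "(y / b) ^ L \<in> K"
proof -
  obtain b where b: "b \<in> M" and eq: "\<And>g. g \<in> G \<Longrightarrow> g y / y = c g * (g b / b)"
    using coh unfolding cohomologous_def by blast
  have bE: "b \<in> E" "b \<noteq> 0" using b M by auto
  have "g (y / b) = c g * (y / b)" if g: "g \<in> G" for g
  proof -
    have "g y = c g * (g b / b) * y" using eq[OF g] y(2) by (simp add: divide_eq_eq)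
    then show ?thesis using divide[OF g y(1) bE(1)] nonzero[OF g bE] by simp
  qed
  then have "(y / b) ^ L \<in> K"
    by (rule power_in_fixed_field[OF subfield_divide[OF subfield y(1) bE(1)] _ c])
  then show ?thesis using that b by blast
qed

end

section \<open>The Chevalley--Bass number\<close>

lemma gal_cyc_aut_action: "aut_action K (cyc K m) (gal_cyc K m) (gal_cyc_comp K m)"
  by unfold_locales (auto simp: cyc_subfield gal_cyc_hom_on gal_cyc_maps gal_cyc_fixes gal_cyc_comp_apply)

lemma gal_cyc_finite_aut_group:
  assumes "0 < m"
  shows "finite_aut_group K (cyc K m) (gal_cyc K m) (gal_cyc_comp K m)"
proof (rule finite_aut_group.intro[OF gal_cyc_aut_action], unfold_locales)
  show "finite (gal_cyc K m)" using finite_gal_cyc[OF assms] .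
  show "gal_cyc K m \<noteq> {}" using restrict_id_in_gal_cyc by blast
qed (auto intro: gal_cyc_comp_closed gal_cyc_eqI)

lemma abs_gal_aut_action: "aut_action K UNIV (abs_gal K) (\<circ>)"
  by unfold_locales (auto simp: subfield_UNIV abs_gal_hom_on abs_gal_fixes)

lemma abs_gal_galois_action:
  fixes K :: "'a::{alg_closed_field, field_char_0} set"
  assumes "is_subfield K" "\<forall>x. algebraic_over K x"
  shows "galois_action K UNIV (abs_gal K) (\<circ>)"
  by (rule galois_action.intro[OF abs_gal_aut_action], unfold_locales)
    (rule abs_gal_fixed_field[OF assms])

lemma gal_cyc_galois_action:
  fixes K :: "'a::{alg_closed_field, field_char_0} set"
  assumes "is_subfield K" "\<forall>x. algebraic_over K x"
  shows "galois_action K (cyc K m) (gal_cyc K m) (gal_cyc_comp K m)"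
proof -
  have fixed_field: "u \<in> K" if u: "u \<in> cyc K m" and fixed: "\<And>g. g \<in> gal_cyc K m \<Longrightarrow> g u = u" for u
  proof (rule abs_gal_fixed_field[OF assms])
    fix \<sigma> assume "\<sigma> \<in> abs_gal K"
    then show "\<sigma> u = u" using fixed[OF restrict_abs_gal_in_gal_cyc] u by fastforce
  qed
  show ?thesis
    by (intro galois_action.intro[OF gal_cyc_aut_action] galois_action_axioms.intro) (rule fixed_field)
qed

lemma inflate_coboundary:
  assumes \<beta>: "\<beta> \<in> cyc K m" and f: "\<And>g. g \<in> gal_cyc K m \<Longrightarrow> f g = g \<beta> / \<beta>"
    and \<sigma>: "\<sigma> \<in> abs_gal K"
  shows "inflate K m f \<sigma> = \<sigma> \<beta> / \<beta>"
  using f[OF restrict_abs_gal_in_gal_cyc[OF \<sigma>]] \<beta> unfolding inflate_def by simp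

lemma cont_cocycle_coboundary:
  assumes "\<alpha> \<noteq> 0" "\<alpha> ^ L \<in> K"
  shows "cont_cocycle K (mu L) (\<lambda>\<sigma>. \<sigma> \<alpha> / \<alpha>)"
  unfolding cont_cocycle_def
proof
  show "cocycle (\<circ>) (abs_gal K) (\<lambda>\<sigma>. \<sigma>) (mu L) (\<lambda>\<sigma>. \<sigma> \<alpha> / \<alpha>)"
    using aut_action.coboundary_cocycle[OF abs_gal_aut_action UNIV_I assms] .
qed (intro exI[of _ "{\<alpha>}"], simp)

definition root_descent :: "'a::field set \<Rightarrow> nat \<Rightarrow> bool" where
  "root_descent K L \<longleftrightarrow> (\<forall>n>0. \<forall>y\<in>cyc K (L * n) - {0}.
     y ^ (L * n) \<in> K \<longrightarrow> (\<exists>\<eta>\<in>mu (L * n). (y / \<eta>) ^ L \<in> K))"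

lemma CB_prop_iff_root_descent:
  fixes K :: "'a::alg_closed_field set"
  assumes L: "0 < L"
  shows "CB_prop K L \<longleftrightarrow> root_descent K L"
proof
  assume cb: "CB_prop K L"
  show "root_descent K L"
    unfolding root_descent_def
  proof (intro allI impI ballI)
    fix n :: nat and y assume n: "0 < n" and y: "y \<in> cyc K (L * n) - {0}" and yK: "y ^ (L * n) \<in> K"
    have "y ^ (L * n) \<in> K - {0}" using y yK by simp
    then obtain z where z: "z \<in> K" "z \<noteq> 0" "y ^ (L * n) = z ^ n"
      using cb n y unfolding CB_prop_def by blast
    obtain \<eta> where \<eta>: "\<eta> ^ L = y ^ L / z" using nth_root_exists[OF L] by blast
    have "\<eta> ^ (L * n) = (y ^ L / z) ^ n" by (simp add: power_mult \<eta>)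
    also have "\<dots> = 1" using z by (simp add: power_divide flip: power_mult)
    finally have "\<eta> ^ (L * n) = 1" .
    moreover have "(y / \<eta>) ^ L = z" using \<eta> z(2) y by (simp add: power_divide)
    ultimately show "\<exists>\<eta>\<in>mu (L * n). (y / \<eta>) ^ L \<in> K" using z(1) unfolding mu_def by auto
  qed
next
  assume rd: "root_descent K L"
  show "CB_prop K L"
    unfolding CB_prop_def
  proof (intro allI impI ballI)
    fix n :: nat and x assume n: "0 < n" and x: "x \<in> K - {0}"
      and "\<exists>y\<in>cyc K (L * n) - {0}. x = y ^ (L * n)"
    then obtain y where y: "y \<in> cyc K (L * n) - {0}" "x = y ^ (L * n)" by blast
    then obtain \<eta> where \<eta>: "\<eta> \<in> mu (L * n)" "(y / \<eta>) ^ L \<in> K"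
      using rd n x unfolding root_descent_def by blast
    have "((y / \<eta>) ^ L) ^ n = x" using \<eta>(1) y unfolding mu_def by (simp add: power_divide power_mult)
    then show "\<exists>z\<in>K - {0}. x = z ^ n"
      using \<eta>(2) x n by (intro bexI[of _ "(y / \<eta>) ^ L"]) auto
  qed
qed

lemma root_descent_coboundary:
  fixes K :: "'a::{alg_closed_field, field_char_0} set"
  assumes K: "is_subfield K" "\<forall>x. algebraic_over K x" and rd: "root_descent K L"
    and L: "0 < L" and n: "0 < n"
    and f: "cocycle (gal_cyc_comp K (L * n)) (gal_cyc K (L * n)) (\<lambda>g. g) (mu (L * n)) f"
  obtains \<beta> \<eta> where "\<beta> \<in> cyc K (L * n)" "\<beta> \<noteq> 0" "\<And>g. g \<in> gal_cyc K (L * n) \<Longrightarrow> f g = g \<beta> / \<beta>"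
    "\<eta> \<in> mu (L * n)" "(\<beta> / \<eta>) ^ L \<in> K"
proof -
  let ?m = "L * n"
  have mn: "0 < ?m" using L n by simp
  interpret G: finite_aut_group K "cyc K ?m" "gal_cyc K ?m" "gal_cyc_comp K ?m"
    using gal_cyc_finite_aut_group[OF mn] .
  interpret G': galois_action K "cyc K ?m" "gal_cyc K ?m" "gal_cyc_comp K ?m"
    using gal_cyc_galois_action[OF K] .
  have "cocycle (gal_cyc_comp K ?m) (gal_cyc K ?m) (\<lambda>g. g) (cyc K ?m - {0}) f"
    using f mu_subset_cyc mu_nonzero[OF mn] unfolding cocycle_def by blast
  obtain \<beta> where \<beta>: "\<beta> \<in> cyc K ?m" "\<beta> \<noteq> 0" "\<And>g. g \<in> gal_cyc K ?m \<Longrightarrow> f g = g \<beta> / \<beta>"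
    using G.hilbert90[OF \<open>cocycle _ _ _ (cyc K ?m - {0}) f\<close>] by blast
  have "\<beta> ^ ?m \<in> K"
  proof (rule G'.coboundary_power_in_fixed_field[OF \<beta>(1,2)])
    fix g assume g: "g \<in> gal_cyc K ?m"
    then have "f g \<in> mu ?m" using f unfolding cocycle_def by blast
    then show "g \<beta> / \<beta> \<in> mu ?m" using \<beta>(3)[OF g] by simp
  qed
  then obtain \<eta> where "\<eta> \<in> mu ?m" "(\<beta> / \<eta>) ^ L \<in> K"
    using rd n \<beta>(1,2) unfolding root_descent_def by blast
  then show ?thesis using that \<beta> by blast
qed

lemma prop_ii_imp_root_descent:
  fixes K :: "'a::{alg_closed_field, field_char_0} set"
  assumes K: "is_subfield K" "\<forall>x. algebraic_over K x" and L: "0 < L" and ii: "prop_ii K L"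
  shows "root_descent K L"
  unfolding root_descent_def
proof (intro allI impI ballI)
  fix n :: nat and y assume n: "0 < n" and y: "y \<in> cyc K (L * n) - {0}" and yK: "y ^ (L * n) \<in> K"
  interpret G: galois_action K "cyc K (L * n)" "gal_cyc K (L * n)" "gal_cyc_comp K (L * n)"
    using gal_cyc_galois_action[OF K] .
  obtain c where "cocycle (gal_cyc_comp K (L * n)) (gal_cyc K (L * n)) (\<lambda>g. g) (mu L) c"
    and coh: "cohomologous (gal_cyc K (L * n)) (\<lambda>g. g) (mu (L * n)) (\<lambda>g. g y / y) c"
    using ii n G.coboundary_cocycle[of y "L * n"] y yK unfolding prop_ii_def by blast
  then have "\<And>g. g \<in> gal_cyc K (L * n) \<Longrightarrow> c g \<in> mu L" unfolding cocycle_def by blast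
  moreover have "mu (L * n) \<subseteq> cyc K (L * n) - {0}"
    using mu_subset_cyc mu_nonzero[of "L * n"] L n by auto
  ultimately show "\<exists>\<eta>\<in>mu (L * n). (y / \<eta>) ^ L \<in> K"
    using G.cohomologous_coboundary_root[of y _ c L] y coh by blast
qed

lemma root_descent_imp_prop_ii:
  fixes K :: "'a::{alg_closed_field, field_char_0} set"
  assumes K: "is_subfield K" "\<forall>x. algebraic_over K x" and L: "0 < L" and rd: "root_descent K L"
  shows "prop_ii K L"
  unfolding prop_ii_def
proof (intro allI impI)
  fix n :: nat and f assume n: "0 < n"
    and f: "cocycle (gal_cyc_comp K (L * n)) (gal_cyc K (L * n)) (\<lambda>g. g) (mu (L * n)) f"
  interpret G: aut_action K "cyc K (L * n)" "gal_cyc K (L * n)" "gal_cyc_comp K (L * n)"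
    by (rule gal_cyc_aut_action)
  obtain \<beta> \<eta> where \<beta>: "\<beta> \<in> cyc K (L * n)" "\<beta> \<noteq> 0"
    "\<And>g. g \<in> gal_cyc K (L * n) \<Longrightarrow> f g = g \<beta> / \<beta>" and \<eta>: "\<eta> \<in> mu (L * n)" "(\<beta> / \<eta>) ^ L \<in> K"
    using root_descent_coboundary[OF K rd L n f] by blast
  have \<eta>E: "\<eta> \<in> cyc K (L * n)" "\<eta> \<noteq> 0"
    using \<eta>(1) mu_subset_cyc mu_nonzero[of "L * n"] L n by auto
  have \<alpha>: "\<beta> / \<eta> \<in> cyc K (L * n)" "\<beta> / \<eta> \<noteq> 0"
    using subfield_divide[OF cyc_subfield \<beta>(1) \<eta>E(1)] \<beta>(2) \<eta>E(2) by auto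
  have "cohomologous (gal_cyc K (L * n)) (\<lambda>g. g) (mu (L * n)) f (\<lambda>g. g (\<beta> / \<eta>) / (\<beta> / \<eta>))"
    using G.coboundary_cohomologous[OF \<beta>(1,2) \<eta>E \<eta>(1)]
      cohomologous_cong[of "gal_cyc K (L * n)" f "\<lambda>g. g \<beta> / \<beta>"] \<beta>(3) by blast
  then show "\<exists>c. cocycle (gal_cyc_comp K (L * n)) (gal_cyc K (L * n)) (\<lambda>g. g) (mu L) c \<and>
      cohomologous (gal_cyc K (L * n)) (\<lambda>g. g) (mu (L * n)) f c"
    using G.coboundary_cocycle[OF \<alpha> \<eta>(2)] by blast
qed

lemma prop_i_imp_root_descent:
  fixes K :: "'a::{alg_closed_field, field_char_0} set"
  assumes K: "is_subfield K" "\<forall>x. algebraic_over K x" and L: "0 < L" and i: "prop_i K L"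
  shows "root_descent K L"
  unfolding root_descent_def
proof (intro allI impI ballI)
  fix n :: nat and y assume n: "0 < n" and y: "y \<in> cyc K (L * n) - {0}" and yK: "y ^ (L * n) \<in> K"
  interpret A: galois_action K UNIV "abs_gal K" "(\<circ>)"
    using abs_gal_galois_action[OF K] .
  interpret G: aut_action K "cyc K (L * n)" "gal_cyc K (L * n)" "gal_cyc_comp K (L * n)"
    by (rule gal_cyc_aut_action)
  obtain c where c: "cont_cocycle K (mu L) c"
    and coh: "cohomologous (abs_gal K) (\<lambda>\<sigma>. \<sigma>) (mu (L * n)) (inflate K (L * n) (\<lambda>g. g y / y)) c"
    using i n G.coboundary_cocycle[of y "L * n"] y yK unfolding prop_i_def by blast
  have "cohomologous (abs_gal K) (\<lambda>\<sigma>. \<sigma>) (mu (L * n)) (\<lambda>\<sigma>. \<sigma> y / y) c"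
    using coh cohomologous_cong[of "abs_gal K" "inflate K (L * n) (\<lambda>g. g y / y)" "\<lambda>\<sigma>. \<sigma> y / y"]
      inflate_coboundary[of y K "L * n"] y by simp
  moreover have "\<And>\<sigma>. \<sigma> \<in> abs_gal K \<Longrightarrow> c \<sigma> \<in> mu L"
    using c unfolding cont_cocycle_def cocycle_def by blast
  moreover have "mu (L * n) \<subseteq> UNIV - {0}" using mu_nonzero[of "L * n"] L n by auto
  ultimately show "\<exists>\<eta>\<in>mu (L * n). (y / \<eta>) ^ L \<in> K"
    using A.cohomologous_coboundary_root[of y _ c L] y by blast
qed

lemma root_descent_imp_prop_i:
  fixes K :: "'a::{alg_closed_field, field_char_0} set"
  assumes K: "is_subfield K" "\<forall>x. algebraic_over K x" and L: "0 < L" and rd: "root_descent K L"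
  shows "prop_i K L"
  unfolding prop_i_def
proof (intro allI impI)
  fix n :: nat and f assume n: "0 < n"
    and f: "cocycle (gal_cyc_comp K (L * n)) (gal_cyc K (L * n)) (\<lambda>g. g) (mu (L * n)) f"
  interpret A: galois_action K UNIV "abs_gal K" "(\<circ>)"
    using abs_gal_galois_action[OF K] .
  obtain \<beta> \<eta> where \<beta>: "\<beta> \<in> cyc K (L * n)" "\<beta> \<noteq> 0"
    "\<And>g. g \<in> gal_cyc K (L * n) \<Longrightarrow> f g = g \<beta> / \<beta>" and \<eta>: "\<eta> \<in> mu (L * n)" "(\<beta> / \<eta>) ^ L \<in> K"
    using root_descent_coboundary[OF K rd L n f] by blast
  have "\<eta> \<noteq> 0" using \<eta>(1) mu_nonzero[of "L * n"] L n by auto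
  have "cohomologous (abs_gal K) (\<lambda>\<sigma>. \<sigma>) (mu (L * n)) (inflate K (L * n) f)
      (\<lambda>\<sigma>. \<sigma> (\<beta> / \<eta>) / (\<beta> / \<eta>))"
    using A.coboundary_cohomologous[of \<beta> \<eta> "mu (L * n)"] \<beta>(2) \<open>\<eta> \<noteq> 0\<close> \<eta>(1)
      cohomologous_cong[of "abs_gal K" "inflate K (L * n) f" "\<lambda>\<sigma>. \<sigma> \<beta> / \<beta>"]
      inflate_coboundary[of \<beta> K "L * n" f, OF \<beta>(1,3)] by simp
  moreover have "cont_cocycle K (mu L) (\<lambda>\<sigma>. \<sigma> (\<beta> / \<eta>) / (\<beta> / \<eta>))"
    by (rule cont_cocycle_coboundary) (use \<beta>(2) \<open>\<eta> \<noteq> 0\<close> \<eta>(2) in simp_all)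
  ultimately show "\<exists>c. cont_cocycle K (mu L) c \<and>
      cohomologous (abs_gal K) (\<lambda>\<sigma>. \<sigma>) (mu (L * n)) (inflate K (L * n) f) c"
    by blast
qed

lemma is_least_pos_cong:
  "(\<And>L. 0 < L \<Longrightarrow> P L \<longleftrightarrow> Q L) \<Longrightarrow> is_least_pos P \<Lambda> \<longleftrightarrow> is_least_pos Q \<Lambda>"
  unfolding is_least_pos_def by metis

theorem lemma2p1:
  fixes K :: "'a :: {alg_closed_field, field_char_0} set"
    and \<Lambda> :: nat
  assumes "is_subfield K"
    and "\<forall>x. algebraic_over K x"
    and "finite_over_Q (K_ab K)"
    and "is_least_pos (CB_prop K) \<Lambda>"
  shows "is_least_pos (prop_i K) \<Lambda> \<and> is_least_pos (prop_ii K) \<Lambda>"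
proof -
  \<comment> \<open>The finiteness of \<open>K_ab K\<close> only guarantees that \<open>\<Lambda>\<close> exists, which is assumed here.\<close>
  have "prop_i K L \<longleftrightarrow> root_descent K L" "prop_ii K L \<longleftrightarrow> root_descent K L" if "0 < L" for L
    using prop_i_imp_root_descent[OF assms(1,2) that] root_descent_imp_prop_i[OF assms(1,2) that]
      prop_ii_imp_root_descent[OF assms(1,2) that] root_descent_imp_prop_ii[OF assms(1,2) that]
    by blast+
  moreover have "CB_prop K L \<longleftrightarrow> root_descent K L" if "0 < L" for L
    using CB_prop_iff_root_descent[of L K, OF that] .
  ultimately have "prop_i K L \<longleftrightarrow> CB_prop K L" "prop_ii K L \<longleftrightarrow> CB_prop K L" if "0 < L" for L
    using that by simp_all
  then show ?thesis
    using assms(4) is_least_pos_cong[of "prop_i K" "CB_prop K"] is_least_pos_cong[of "prop_ii K" "CB_prop K"]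
    by blast
qed

end
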